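(* Let $G$ be a reaction network with exactly two reactions and suppose $cap_{pos}(G)=2N+1$ with $0\le N<+\infty$. If for a rate-constant vector $\kappa^*$ and a total-constant vector $c^*$, $G$ has $2N+1$ positive steady states in $\mathcal P_{c^*}$ and $N+1$ of them are stable, then $(\gamma_{\tau1}-\gamma_{\tau2})(\beta_{\tau1}-\alpha_{\tau1})<0$, where $\tau$ and $\gamma_{\tau j}$ are computed from $c^*$. In particular, if $\tau$ is the only index in its class $[\tau]$, then $(\alpha_{\tau1}-\alpha_{\tau2})(\beta_{\tau1}-\alpha_{\tau1})<0$.
   Context: A reaction network $G$ has species $X_1,\dots,X_s$ and $m$ reactions $\sum_{i}\alpha_{ij}X_i\to\sum_i\beta_{ij}X_i$, $\alpha_{ij},\beta_{ij}\in\mathbb Z_{\ge0}$, $(\alpha_{1j},\dots,\alpha_{sj})\neq(\beta_{1j},\dots,\beta_{sj})$; here $m=2$. $\mathcal N$ has entries $\beta_{ij}-\alpha_{ij}$, $S=\mathrm{im}\,\mathcal N$. For $\kappa\in\mathbb R^m_{>0}$, $f(\kappa;x)=\mathcal N(\kappa_1\prod_i x_i^{\alpha_{i1}},\kappa_2\prod_i x_i^{\alpha_{i2}})^\top$. When $G$ has a positive steady state, $S$ is one-dimensional; species are then labelled so that $\beta_{11}-\alpha_{11}\ne0$, and for $c\in\mathbb R^{s-1}$, $\mathcal P_c=\{x\in\mathbb R^s_{\ge0}:(\beta_{i1}-\alpha_{i1})x_1-(\beta_{11}-\alpha_{11})x_i=c_{i-1},\ i=2,\dots,s\}$. A steady state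 is $x\ge0$ with $f(\kappa;x)=0$; positive if $x>0$; nondegenerate if $\mathrm{Jac}_f(x)(S)=S$; stable if nondegenerate and all nonzero eigenvalues of $\mathrm{Jac}_f(x)$ have negative real parts. $cap_{pos}(G)$ is the maximal $N\in\mathbb Z_{\ge0}\cup\{+\infty\}$ such that for some $\kappa$ and compatibility class, $G$ has $N$ positive steady states in it. Notation for $c^*$: $A_1=1,B_1=0$, $A_i=\frac{\beta_{i1}-\alpha_{i1}}{\beta_{11}-\alpha_{11}}$, $B_i=-\frac{c^*_{i-1}}{\beta_{11}-\alpha_{11}}$ ($i\ge2$). $[i]=\{k:A_k\ne0,B_k/A_k=B_i/A_i\}$ if $A_i\ne0$, $[i]=\{k:A_k=0\}$ otherwise; species labelled so that $1,\dots,r$ represent the $r$ distinct classes. $\varphi_k=\min_j\sum_{i\in[k]}\alpha_{ij}$, $\gamma_{kj}=\sum_{i\in[k]}\alpha_{ij}-\varphi_k$. $\mathcal J=\{i:A_i\ne0\}$, $\mathcal H=\{k\in\{1,\dots,r\}\cap\mathcal J:\gamma_{k1},\dots,\gamma_{km}\text{ not all equal}\}$. Standing assumption: if for some rate constants $G$ has $N$ positive steady states in $\mathcal P_{c^*}$ with $0<N<\infty$, species are labelled so that $1\in\mathcal H$. $I_i=(-B_i/A_i,+\infty)$ if $A_i>0$, $(0,+\infty)$ if $A_i=0$, $(0,-B_i/A_i)$ if $A_i<0$; $I=\bigcap_{k\in\mathcal H}I_k$; $\tau\in\mathcal H$ has $A_\tau>0$ with $-B_\tau/A_\tau$ the left endpoint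 of $I$. *)

theory Defs
  imports "HOL-Analysis.Analysis" "HOL-Library.Extended_Nat"
begin

text \<open>A reaction network with two reactions on species 1..s.
  alpha i j, beta i j (i in 1..s, j in 1..2) are the stoichiometric coefficients
  of species X_i in the reactant / product complex of reaction j.
  Rate constants kappa :: nat => real (only kappa 1, kappa 2 are used),
  concentration vectors x :: nat => real (entries x 1 .. x s; zero elsewhere),
  total constants c :: nat => real (entries c 1 .. c (s-1)).\<close>

definition two_reaction_network :: "nat \<Rightarrow> (nat \<Rightarrow> nat \<Rightarrow> nat) \<Rightarrow> (nat \<Rightarrow> nat \<Rightarrow> nat) \<Rightarrow> bool" where
  "two_reaction_network s \<alpha> \<beta> \<longleftrightarrow> s \<ge> 1 \<and>
     (\<forall>j\<in>{1,2}. \<exists>i\<in>{1..s}. \<alpha> i j \<noteq> \<beta> i j)"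

definition stoich :: "(nat \<Rightarrow> nat \<Rightarrow> nat) \<Rightarrow> (nat \<Rightarrow> nat \<Rightarrow> nat) \<Rightarrow> nat \<Rightarrow> nat \<Rightarrow> real" where
  "stoich \<alpha> \<beta> i j = real (\<beta> i j) - real (\<alpha> i j)"

definition rfield :: "nat \<Rightarrow> (nat \<Rightarrow> nat \<Rightarrow> nat) \<Rightarrow> (nat \<Rightarrow> nat \<Rightarrow> nat) \<Rightarrow> (nat \<Rightarrow> real)
    \<Rightarrow> (nat \<Rightarrow> real) \<Rightarrow> nat \<Rightarrow> real" where
  "rfield s \<alpha> \<beta> \<kappa> x i =
     (\<Sum>j\<in>{1,2}. stoich \<alpha> \<beta> i j * (\<kappa> j * (\<Prod>l\<in>{1..s}. x l ^ \<alpha> l j)))"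

definition jac :: "nat \<Rightarrow> (nat \<Rightarrow> nat \<Rightarrow> nat) \<Rightarrow> (nat \<Rightarrow> nat \<Rightarrow> nat) \<Rightarrow> (nat \<Rightarrow> real)
    \<Rightarrow> (nat \<Rightarrow> real) \<Rightarrow> nat \<Rightarrow> nat \<Rightarrow> real" where
  "jac s \<alpha> \<beta> \<kappa> x i k = deriv (\<lambda>t. rfield s \<alpha> \<beta> \<kappa> (x(k := t)) i) (x k)"

definition stoich_space :: "nat \<Rightarrow> (nat \<Rightarrow> nat \<Rightarrow> nat) \<Rightarrow> (nat \<Rightarrow> nat \<Rightarrow> nat) \<Rightarrow> (nat \<Rightarrow> real) set" where
  "stoich_space s \<alpha> \<beta> = {v. \<exists>a b. \<forall>i. v i =
      (if i \<in> {1..s} then a * stoich \<alpha> \<beta> i 1 + b * stoich \<alpha> \<beta> i 2 else 0)}"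

definition mat_app :: "nat \<Rightarrow> (nat \<Rightarrow> nat \<Rightarrow> real) \<Rightarrow> (nat \<Rightarrow> real) \<Rightarrow> (nat \<Rightarrow> real)" where
  "mat_app s M v = (\<lambda>i. if i \<in> {1..s} then (\<Sum>k\<in>{1..s}. M i k * v k) else 0)"

definition is_eigenvalue :: "nat \<Rightarrow> (nat \<Rightarrow> nat \<Rightarrow> real) \<Rightarrow> complex \<Rightarrow> bool" where
  "is_eigenvalue s M z \<longleftrightarrow> (\<exists>v :: nat \<Rightarrow> complex. (\<exists>i\<in>{1..s}. v i \<noteq> 0) \<and>
      (\<forall>i\<in>{1..s}. (\<Sum>k\<in>{1..s}. complex_of_real (M i k) * v k) = z * v i))"

text \<open>Stoichiometric compatibility class P_c (species labelled so that beta 1 1 \<noteq> alpha 1 1).\<close>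
definition compat_class :: "nat \<Rightarrow> (nat \<Rightarrow> nat \<Rightarrow> nat) \<Rightarrow> (nat \<Rightarrow> nat \<Rightarrow> nat) \<Rightarrow> (nat \<Rightarrow> real)
    \<Rightarrow> (nat \<Rightarrow> real) set" where
  "compat_class s \<alpha> \<beta> c = {x. (\<forall>i. i \<notin> {1..s} \<longrightarrow> x i = 0) \<and> (\<forall>i\<in>{1..s}. x i \<ge> 0) \<and>
      (\<forall>i\<in>{2..s}. stoich \<alpha> \<beta> i 1 * x 1 - stoich \<alpha> \<beta> 1 1 * x i = c (i - 1))}"

definition pos_steady_states :: "nat \<Rightarrow> (nat \<Rightarrow> nat \<Rightarrow> nat) \<Rightarrow> (nat \<Rightarrow> nat \<Rightarrow> nat) \<Rightarrow> (nat \<Rightarrow> real)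
    \<Rightarrow> (nat \<Rightarrow> real) \<Rightarrow> (nat \<Rightarrow> real) set" where
  "pos_steady_states s \<alpha> \<beta> \<kappa> c = {x \<in> compat_class s \<alpha> \<beta> c.
      (\<forall>i\<in>{1..s}. x i > 0) \<and> (\<forall>i\<in>{1..s}. rfield s \<alpha> \<beta> \<kappa> x i = 0)}"

definition nondegenerate :: "nat \<Rightarrow> (nat \<Rightarrow> nat \<Rightarrow> nat) \<Rightarrow> (nat \<Rightarrow> nat \<Rightarrow> nat) \<Rightarrow> (nat \<Rightarrow> real)
    \<Rightarrow> (nat \<Rightarrow> real) \<Rightarrow> bool" where
  "nondegenerate s \<alpha> \<beta> \<kappa> x \<longleftrightarrow>
     mat_app s (jac s \<alpha> \<beta> \<kappa> x) ` stoich_space s \<alpha> \<beta> = stoich_space s \<alpha> \<beta>"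

definition stable :: "nat \<Rightarrow> (nat \<Rightarrow> nat \<Rightarrow> nat) \<Rightarrow> (nat \<Rightarrow> nat \<Rightarrow> nat) \<Rightarrow> (nat \<Rightarrow> real)
    \<Rightarrow> (nat \<Rightarrow> real) \<Rightarrow> bool" where
  "stable s \<alpha> \<beta> \<kappa> x \<longleftrightarrow> nondegenerate s \<alpha> \<beta> \<kappa> x \<and>
     (\<forall>z. is_eigenvalue s (jac s \<alpha> \<beta> \<kappa> x) z \<and> z \<noteq> 0 \<longrightarrow> Re z < 0)"

definition ecard :: "'a set \<Rightarrow> enat" where
  "ecard A = (if finite A then enat (card A) else \<infinity>)"

definition cap_pos :: "nat \<Rightarrow> (nat \<Rightarrow> nat \<Rightarrow> nat) \<Rightarrow> (nat \<Rightarrow> nat \<Rightarrow> nat) \<Rightarrow> enat" where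
  "cap_pos s \<alpha> \<beta> = Sup {ecard (pos_steady_states s \<alpha> \<beta> \<kappa> c) | \<kappa> c. \<kappa> 1 > 0 \<and> \<kappa> 2 > 0}"

definition coefA :: "(nat \<Rightarrow> nat \<Rightarrow> nat) \<Rightarrow> (nat \<Rightarrow> nat \<Rightarrow> nat) \<Rightarrow> nat \<Rightarrow> real" where
  "coefA \<alpha> \<beta> i = (if i = 1 then 1 else stoich \<alpha> \<beta> i 1 / stoich \<alpha> \<beta> 1 1)"

definition coefB :: "(nat \<Rightarrow> nat \<Rightarrow> nat) \<Rightarrow> (nat \<Rightarrow> nat \<Rightarrow> nat) \<Rightarrow> (nat \<Rightarrow> real) \<Rightarrow> nat \<Rightarrow> real" where
  "coefB \<alpha> \<beta> c i = (if i = 1 then 0 else - c (i - 1) / stoich \<alpha> \<beta> 1 1)"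

definition sp_class :: "nat \<Rightarrow> (nat \<Rightarrow> nat \<Rightarrow> nat) \<Rightarrow> (nat \<Rightarrow> nat \<Rightarrow> nat) \<Rightarrow> (nat \<Rightarrow> real) \<Rightarrow> nat \<Rightarrow> nat set" where
  "sp_class s \<alpha> \<beta> c i =
     (if coefA \<alpha> \<beta> i \<noteq> 0 then
        {k\<in>{1..s}. coefA \<alpha> \<beta> k \<noteq> 0 \<and> coefB \<alpha> \<beta> c k / coefA \<alpha> \<beta> k = coefB \<alpha> \<beta> c i / coefA \<alpha> \<beta> i}
      else {k\<in>{1..s}. coefA \<alpha> \<beta> k = 0})"

definition phi :: "nat \<Rightarrow> (nat \<Rightarrow> nat \<Rightarrow> nat) \<Rightarrow> (nat \<Rightarrow> nat \<Rightarrow> nat) \<Rightarrow> (nat \<Rightarrow> real) \<Rightarrow> nat \<Rightarrow> nat" where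
  "phi s \<alpha> \<beta> c k = min (\<Sum>i\<in>sp_class s \<alpha> \<beta> c k. \<alpha> i 1) (\<Sum>i\<in>sp_class s \<alpha> \<beta> c k. \<alpha> i 2)"

definition gam :: "nat \<Rightarrow> (nat \<Rightarrow> nat \<Rightarrow> nat) \<Rightarrow> (nat \<Rightarrow> nat \<Rightarrow> nat) \<Rightarrow> (nat \<Rightarrow> real) \<Rightarrow> nat \<Rightarrow> nat \<Rightarrow> int" where
  "gam s \<alpha> \<beta> c k j = int (\<Sum>i\<in>sp_class s \<alpha> \<beta> c k. \<alpha> i j) - int (phi s \<alpha> \<beta> c k)"

definition Jset :: "nat \<Rightarrow> (nat \<Rightarrow> nat \<Rightarrow> nat) \<Rightarrow> (nat \<Rightarrow> nat \<Rightarrow> nat) \<Rightarrow> nat set" where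
  "Jset s \<alpha> \<beta> = {i\<in>{1..s}. coefA \<alpha> \<beta> i \<noteq> 0}"

definition Hset :: "nat \<Rightarrow> (nat \<Rightarrow> nat \<Rightarrow> nat) \<Rightarrow> (nat \<Rightarrow> nat \<Rightarrow> nat) \<Rightarrow> (nat \<Rightarrow> real) \<Rightarrow> nat \<Rightarrow> nat set" where
  "Hset s \<alpha> \<beta> c r = {k \<in> {1..r} \<inter> Jset s \<alpha> \<beta>. gam s \<alpha> \<beta> c k 1 \<noteq> gam s \<alpha> \<beta> c k 2}"

definition Ival :: "(nat \<Rightarrow> nat \<Rightarrow> nat) \<Rightarrow> (nat \<Rightarrow> nat \<Rightarrow> nat) \<Rightarrow> (nat \<Rightarrow> real) \<Rightarrow> nat \<Rightarrow> real set" where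
  "Ival \<alpha> \<beta> c i =
     (if coefA \<alpha> \<beta> i > 0 then {- coefB \<alpha> \<beta> c i / coefA \<alpha> \<beta> i <..}
      else if coefA \<alpha> \<beta> i = 0 then {0<..}
      else {0<..< - coefB \<alpha> \<beta> c i / coefA \<alpha> \<beta> i})"

definition Iset :: "nat \<Rightarrow> (nat \<Rightarrow> nat \<Rightarrow> nat) \<Rightarrow> (nat \<Rightarrow> nat \<Rightarrow> nat) \<Rightarrow> (nat \<Rightarrow> real) \<Rightarrow> nat \<Rightarrow> real set" where
  "Iset s \<alpha> \<beta> c r = (\<Inter>k\<in>Hset s \<alpha> \<beta> c r. Ival \<alpha> \<beta> c k)"

definition is_tau :: "nat \<Rightarrow> (nat \<Rightarrow> nat \<Rightarrow> nat) \<Rightarrow> (nat \<Rightarrow> nat \<Rightarrow> nat) \<Rightarrow> (nat \<Rightarrow> real) \<Rightarrow> nat \<Rightarrow> nat \<Rightarrow> bool" where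
  "is_tau s \<alpha> \<beta> c r \<tau> \<longleftrightarrow> \<tau> \<in> Hset s \<alpha> \<beta> c r \<and> coefA \<alpha> \<beta> \<tau> > 0 \<and>
     Iset s \<alpha> \<beta> c r \<noteq> {} \<and> - coefB \<alpha> \<beta> c \<tau> / coefA \<alpha> \<beta> \<tau> = Inf (Iset s \<alpha> \<beta> c r)"

text \<open>Labelling of species: 1..r are representatives of the r distinct classes.\<close>
definition class_reps :: "nat \<Rightarrow> (nat \<Rightarrow> nat \<Rightarrow> nat) \<Rightarrow> (nat \<Rightarrow> nat \<Rightarrow> nat) \<Rightarrow> (nat \<Rightarrow> real) \<Rightarrow> nat \<Rightarrow> bool" where
  "class_reps s \<alpha> \<beta> c r \<longleftrightarrow> r \<le> s \<and>
     (\<forall>k1\<in>{1..r}. \<forall>k2\<in>{1..r}. sp_class s \<alpha> \<beta> c k1 = sp_class s \<alpha> \<beta> c k2 \<longrightarrow> k1 = k2) \<and>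
     (\<forall>i\<in>{1..s}. \<exists>k\<in>{1..r}. i \<in> sp_class s \<alpha> \<beta> c k)"

end

(* Parametrise the compatibility class by t = x_1.  Because the two columns of the stoichiometric
   matrix are proportional with a negative ratio, the positive steady states are the zeros of one
   scalar function g of t on an open interval, and a steady state is stable exactly when
   (beta_11 - alpha_11) g' < 0 there.  So the N + 1 stable ones among the 2N + 1 zeros are down
   crossings of h = (beta_11 - alpha_11) g, there are more down than up crossings, and h must be
   positive to the left of all zeros.

   To find the sign of g there, move the zeros of the coordinates whose class has
   gamma_k1 = gamma_k2 to the left of the zero L of the coordinates in [tau].  On the old interval
   this only multiplies g by a positive factor, and it creates no new steady states because the
   capacity 2N + 1 is already attained.  The new interval reaches down to L, where the modified g
   behaves like (t - L)^(gamma_tau1) - c (t - L)^(gamma_tau2) with c > 0, so its sign near L is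
   that of gamma_tau2 - gamma_tau1.  Hence beta_11 - alpha_11, and with it beta_tau1 - alpha_tau1,
   has the sign of gamma_tau2 - gamma_tau1. *)

theory Submission
  imports Defs
begin

section \<open>Sign changes of real functions\<close>

definition down_crossing :: "(real \<Rightarrow> real) \<Rightarrow> real \<Rightarrow> bool" where
  "down_crossing f z \<longleftrightarrow>
     (\<exists>e>0. (\<forall>u. z - e < u \<and> u < z \<longrightarrow> f u > 0) \<and> (\<forall>u. z < u \<and> u < z + e \<longrightarrow> f u < 0))"

definition up_crossing :: "(real \<Rightarrow> real) \<Rightarrow> real \<Rightarrow> bool" where
  "up_crossing f z \<longleftrightarrow> down_crossing (\<lambda>t. - f t) z"

lemma down_crossing_uminus: "down_crossing (\<lambda>t. - f t) z \<longleftrightarrow> up_crossing f z"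
  by (simp add: up_crossing_def)

lemma up_crossing_uminus: "up_crossing (\<lambda>t. - f t) z \<longleftrightarrow> down_crossing f z"
  by (simp add: up_crossing_def)

lemma not_down_and_up_crossing: "\<not> (down_crossing f z \<and> up_crossing f z)"
proof
  assume "down_crossing f z \<and> up_crossing f z"
  then obtain e1 e2 where "e1 > 0" "\<forall>u. z - e1 < u \<and> u < z \<longrightarrow> f u > 0"
    and "e2 > 0" "\<forall>u. z - e2 < u \<and> u < z \<longrightarrow> f u < 0"
    unfolding up_crossing_def down_crossing_def by auto
  then have "f (z - min e1 e2 / 2) > 0" "f (z - min e1 e2 / 2) < 0" by auto
  then show False by simp
qed

lemma down_crossing_if_deriv_neg:
  assumes "(f has_real_derivative D) (at z)" "D < 0" "f z = 0"
  shows "down_crossing f z"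
proof -
  obtain d1 where d1: "d1 > 0" "\<And>h. 0 < h \<Longrightarrow> h < d1 \<Longrightarrow> f z < f (z - h)"
    using DERIV_neg_dec_left[OF assms(1,2)] by blast
  obtain d2 where d2: "d2 > 0" "\<And>h. 0 < h \<Longrightarrow> h < d2 \<Longrightarrow> f (z + h) < f z"
    using DERIV_neg_dec_right[OF assms(1,2)] by blast
  show ?thesis unfolding down_crossing_def
  proof (intro exI[of _ "min d1 d2"] conjI allI impI)
    fix u assume "z - min d1 d2 < u \<and> u < z"
    then show "f u > 0" using d1(2)[of "z - u"] \<open>f z = 0\<close> by auto
  next
    fix u assume "z < u \<and> u < z + min d1 d2"
    then show "f u < 0" using d2(2)[of "u - z"] \<open>f z = 0\<close> by auto
  qed (use d1 d2 in simp)
qed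

lemma continuous_nonzero_sign_eq:
  fixes f :: "real \<Rightarrow> real"
  assumes "continuous_on {u..v} f" "u \<le> v" "\<And>x. u \<le> x \<Longrightarrow> x \<le> v \<Longrightarrow> f x \<noteq> 0"
  shows "f u > 0 \<longleftrightarrow> f v > 0"
proof
  assume "f u > 0"
  show "f v > 0"
  proof (rule ccontr)
    assume "\<not> f v > 0"
    then obtain x where "u \<le> x" "x \<le> v" "f x = 0"
      using IVT2'[of f v 0 u] \<open>f u > 0\<close> assms(1,2) by force
    with assms(3) show False by blast
  qed
next
  assume "f v > 0"
  show "f u > 0"
  proof (rule ccontr)
    assume "\<not> f u > 0"
    then obtain x where "u \<le> x" "x \<le> v" "f x = 0"
      using IVT'[of f u 0 v] \<open>f v > 0\<close> assms(1,2) by force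
    with assms(3) show False by blast
  qed
qed

lemma down_crossing_iff_endpoint_signs:
  fixes f :: "real \<Rightarrow> real"
  assumes cont: "continuous_on {a..b} f" and "a < z" "z < b"
    and nz: "\<And>x. a \<le> x \<Longrightarrow> x \<le> b \<Longrightarrow> x \<noteq> z \<Longrightarrow> f x \<noteq> 0"
  shows "down_crossing f z \<longleftrightarrow> f a > 0 \<and> f b < 0"
proof -
  have left: "f u > 0 \<longleftrightarrow> f a > 0" if "a \<le> u" "u < z" for u
    by (rule continuous_nonzero_sign_eq[symmetric])
      (use that assms in \<open>auto intro: continuous_on_subset\<close>)
  have right: "f u > 0 \<longleftrightarrow> f b > 0" if "z < u" "u \<le> b" for u
    by (rule continuous_nonzero_sign_eq)
      (use that assms in \<open>auto intro: continuous_on_subset\<close>)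
  have right_nz: "f u \<noteq> 0" if "z < u" "u \<le> b" for u
    using nz that \<open>a < z\<close> by auto
  then have fb: "f b \<noteq> 0" using \<open>z < b\<close> by simp
  show ?thesis
  proof
    assume "down_crossing f z"
    then obtain e where "e > 0" and e: "\<And>u. z - e < u \<Longrightarrow> u < z \<Longrightarrow> f u > 0"
      "\<And>u. z < u \<Longrightarrow> u < z + e \<Longrightarrow> f u < 0"
      unfolding down_crossing_def by blast
    have "f (max a (z - e/2)) > 0" using e(1) \<open>e > 0\<close> \<open>a < z\<close> by auto
    then have "f a > 0" using left[of "max a (z - e/2)"] \<open>e > 0\<close> \<open>a < z\<close> by auto
    moreover have "f (min b (z + e/2)) < 0" using e(2) \<open>e > 0\<close> \<open>z < b\<close> by auto
    then have "f b < 0" using right[of "min b (z + e/2)"] fb \<open>e > 0\<close> \<open>z < b\<close> by auto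
    ultimately show "f a > 0 \<and> f b < 0" ..
  next
    assume signs: "f a > 0 \<and> f b < 0"
    show "down_crossing f z" unfolding down_crossing_def
    proof (intro exI[of _ "min (z - a) (b - z)"] conjI allI impI)
      fix u assume "z - min (z - a) (b - z) < u \<and> u < z"
      then show "f u > 0" using left[of u] signs by auto
    next
      fix u assume "z < u \<and> u < z + min (z - a) (b - z)"
      then show "f u < 0" using right[of u] right_nz[of u] signs by force
    qed (use assms in simp)
  qed
qed

lemma up_crossing_iff_endpoint_signs:
  fixes f :: "real \<Rightarrow> real"
  assumes "continuous_on {a..b} f" "a < z" "z < b"
    "\<And>x. a \<le> x \<Longrightarrow> x \<le> b \<Longrightarrow> x \<noteq> z \<Longrightarrow> f x \<noteq> 0"
  shows "up_crossing f z \<longleftrightarrow> f a < 0 \<and> f b > 0"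
  unfolding up_crossing_def
  by (subst down_crossing_iff_endpoint_signs) (use assms in \<open>auto intro: continuous_intros\<close>)

lemma open_finite_gap_left:
  fixes U F :: "real set"
  assumes "open U" "z \<in> U" "finite F"
  obtains q where "q \<in> U" "q < z" "\<And>x. x \<in> F \<Longrightarrow> x < z \<Longrightarrow> x < q"
proof -
  obtain e where "e > 0" "ball z e \<subseteq> U"
    using assms(1,2) open_contains_ball by blast
  define \<delta> where "\<delta> = Min (insert e ((\<lambda>x. z - x) ` {x \<in> F. x < z}))"
  have fin: "finite (insert e ((\<lambda>x. z - x) ` {x \<in> F. x < z}))" using assms(3) by simp
  have "\<delta> > 0" unfolding \<delta>_def using \<open>e > 0\<close> fin by auto
  have "\<delta> \<le> e" unfolding \<delta>_def using fin by simp
  have "\<delta> \<le> z - x" if "x \<in> F" "x < z" for x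
    unfolding \<delta>_def using fin that by simp
  then show ?thesis
    using that[of "z - \<delta>/2"] \<open>\<delta> > 0\<close> \<open>\<delta> \<le> e\<close> \<open>ball z e \<subseteq> U\<close> by (force simp: dist_real_def)
qed

lemma crossing_indicator_step:
  fixes f :: "real \<Rightarrow> real"
  assumes "continuous_on {a..b} f" "a < z" "z < b" "f a \<noteq> 0" "f b \<noteq> 0"
    "\<And>x. a \<le> x \<Longrightarrow> x \<le> b \<Longrightarrow> x \<noteq> z \<Longrightarrow> f x \<noteq> 0"
  shows "(of_bool (f b < 0) :: int)
    = of_bool (f a < 0) + of_bool (down_crossing f z) - of_bool (up_crossing f z)"
  using down_crossing_iff_endpoint_signs[OF assms(1-3,6)] up_crossing_iff_endpoint_signs[OF assms(1-3,6)]
    assms(4,5) by (cases "f a < 0"; cases "f b < 0") auto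

lemma card_Collect_insert:
  assumes "finite X" "x \<notin> X"
  shows "card {z \<in> insert x X. P z} = card {z \<in> X. P z} + of_bool (P x)"
proof (cases "P x")
  case True
  then have "{z \<in> insert x X. P z} = insert x {z \<in> X. P z}" by auto
  then show ?thesis using True assms by simp
next
  case False
  then have "{z \<in> insert x X. P z} = {z \<in> X. P z}" by auto
  then show ?thesis using False by simp
qed

lemma last_zero_below:
  fixes f :: "real \<Rightarrow> real" and U :: "real set"
  assumes "open U" "is_interval U" and fin: "finite {z \<in> U. f z = 0}"
    and "q \<in> U" "f q \<noteq> 0" "{z \<in> U. f z = 0 \<and> z < q} \<noteq> {}"
  obtains z0 q' where "q' \<in> U" "q' < z0" "z0 < q"
    "{z \<in> U. f z = 0 \<and> z < q} = insert z0 {z \<in> U. f z = 0 \<and> z < q'}"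
    "\<And>x. q' \<le> x \<Longrightarrow> x \<le> q \<Longrightarrow> x \<noteq> z0 \<Longrightarrow> f x \<noteq> 0"
proof -
  define Zq where "Zq = {z \<in> U. f z = 0 \<and> z < q}"
  have "finite Zq" using fin unfolding Zq_def by (rule finite_subset[rotated]) blast
  define z0 where "z0 = Max Zq"
  have z0: "z0 \<in> Zq" and z0_max: "\<And>z. z \<in> Zq \<Longrightarrow> z \<le> z0"
    unfolding z0_def using Max_in[OF \<open>finite Zq\<close>] Max_ge[OF \<open>finite Zq\<close>] assms(6) Zq_def by auto
  have "z0 \<in> U" "z0 < q" using z0 unfolding Zq_def by auto
  obtain q' where "q' \<in> U" "q' < z0" and gap: "\<And>x. x \<in> {z \<in> U. f z = 0} \<Longrightarrow> x < z0 \<Longrightarrow> x < q'"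
    by (rule open_finite_gap_left[OF \<open>open U\<close> \<open>z0 \<in> U\<close> fin]) (rule that)
  have "Zq = insert z0 {z \<in> U. f z = 0 \<and> z < q'}"
  proof (intro set_eqI iffI)
    fix x assume "x \<in> Zq"
    then show "x \<in> insert z0 {z \<in> U. f z = 0 \<and> z < q'}"
      using z0_max[of x] gap[of x] unfolding Zq_def by force
  next
    fix x assume "x \<in> insert z0 {z \<in> U. f z = 0 \<and> z < q'}"
    then show "x \<in> Zq" using z0 \<open>q' < z0\<close> \<open>z0 < q\<close> unfolding Zq_def by auto
  qed
  moreover have "f x \<noteq> 0" if "q' \<le> x" "x \<le> q" "x \<noteq> z0" for x
  proof
    assume "f x = 0"
    have "x \<in> U" using mem_is_interval_1_I[OF \<open>is_interval U\<close> \<open>q' \<in> U\<close> \<open>q \<in> U\<close>] that by simp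
    show False
    proof (cases "x < z0")
      case True
      then show False using gap[of x] \<open>x \<in> U\<close> \<open>f x = 0\<close> \<open>q' \<le> x\<close> by simp
    next
      case False
      then have "x \<in> Zq" using \<open>x \<in> U\<close> \<open>f x = 0\<close> \<open>f q \<noteq> 0\<close> that unfolding Zq_def
        by (cases "x = q") auto
      then show False using z0_max[of x] False \<open>x \<noteq> z0\<close> by simp
    qed
  qed
  ultimately show ?thesis using that \<open>q' \<in> U\<close> \<open>q' < z0\<close> \<open>z0 < q\<close> unfolding Zq_def by blast
qed

text \<open>Walking from left to right, down and up crossings alternate, starting with a down crossing
  when the function starts out positive.\<close>

lemma down_minus_up_crossings_below:
  fixes f :: "real \<Rightarrow> real" and U :: "real set"
  assumes cont: "continuous_on U f" and "open U" and "is_interval U"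
    and fin: "finite {z \<in> U. f z = 0}"
    and start: "\<And>p. p \<in> U \<Longrightarrow> (\<And>z. z \<in> U \<Longrightarrow> f z = 0 \<Longrightarrow> p < z) \<Longrightarrow> f p > 0"
    and "q \<in> U" "f q \<noteq> 0"
  shows "int (card {z \<in> U. f z = 0 \<and> z < q \<and> down_crossing f z})
           - int (card {z \<in> U. f z = 0 \<and> z < q \<and> up_crossing f z}) = of_bool (f q < 0)"
proof -
  define Zb where "Zb x = {z \<in> U. f z = 0 \<and> z < x}" for x
  have finZb: "finite (Zb x)" for x
    using fin unfolding Zb_def by (rule finite_subset[rotated]) blast
  have "int (card {z \<in> Zb q. down_crossing f z}) - int (card {z \<in> Zb q. up_crossing f z})
          = of_bool (f q < 0)"
    if "q \<in> U" "f q \<noteq> 0" "card (Zb q) = n" for n q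
    using that
  proof (induction n arbitrary: q)
    case 0
    then have "Zb q = {}" using finZb by simp
    have "q < z" if "z \<in> U" "f z = 0" for z
      using \<open>Zb q = {}\<close> \<open>f q \<noteq> 0\<close> that unfolding Zb_def by (cases "z = q") force+
    then have "f q > 0" by (rule start[OF \<open>q \<in> U\<close>])
    with \<open>Zb q = {}\<close> show ?case by simp
  next
    case (Suc n q)
    then have "Zb q \<noteq> {}" by (metis card.empty nat.distinct(1))
    obtain z0 q' where "q' \<in> U" "q' < z0" "z0 < q"
      and Zb_q: "{z \<in> U. f z = 0 \<and> z < q} = insert z0 {z \<in> U. f z = 0 \<and> z < q'}"
      and nz: "\<And>x. q' \<le> x \<Longrightarrow> x \<le> q \<Longrightarrow> x \<noteq> z0 \<Longrightarrow> f x \<noteq> 0"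
      using \<open>Zb q \<noteq> {}\<close> unfolding Zb_def
      by (rule last_zero_below[OF \<open>open U\<close> \<open>is_interval U\<close> fin \<open>q \<in> U\<close> \<open>f q \<noteq> 0\<close>]) (rule that)
    note Zb_q = Zb_q[folded Zb_def]
    have "f q' \<noteq> 0" using nz \<open>q' < z0\<close> \<open>z0 < q\<close> by simp
    have "z0 \<notin> Zb q'" using \<open>q' < z0\<close> unfolding Zb_def by simp
    then have "card (Zb q') = n" using Suc.prems(3) finZb unfolding Zb_q by simp
    note IH = Suc.IH[OF \<open>q' \<in> U\<close> \<open>f q' \<noteq> 0\<close> this]
    have "{q'..q} \<subseteq> U"
      using mem_is_interval_1_I[OF \<open>is_interval U\<close> \<open>q' \<in> U\<close> \<open>q \<in> U\<close>] by auto
    with cont have "continuous_on {q'..q} f" by (rule continuous_on_subset)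
    from crossing_indicator_step[OF this \<open>q' < z0\<close> \<open>z0 < q\<close> \<open>f q' \<noteq> 0\<close> \<open>f q \<noteq> 0\<close> nz]
    show ?case
      using IH unfolding Zb_q card_Collect_insert[OF finZb \<open>z0 \<notin> Zb q'\<close>] by simp
  qed
  then show ?thesis using assms(6,7) unfolding Zb_def by simp
qed

lemma card_up_crossings_le_down_crossings:
  fixes f :: "real \<Rightarrow> real" and U :: "real set"
  assumes "continuous_on U f" "open U" "is_interval U" "finite {z \<in> U. f z = 0}"
    and "\<And>p. p \<in> U \<Longrightarrow> (\<And>z. z \<in> U \<Longrightarrow> f z = 0 \<Longrightarrow> p < z) \<Longrightarrow> f p > 0"
  shows "card {z \<in> U. f z = 0 \<and> up_crossing f z} \<le> card {z \<in> U. f z = 0 \<and> down_crossing f z}"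
proof (cases "{z \<in> U. f z = 0} = {}")
  case False
  define zm where "zm = Max {z \<in> U. f z = 0}"
  have "zm \<in> U" and zm_max: "\<And>z. z \<in> U \<Longrightarrow> f z = 0 \<Longrightarrow> z \<le> zm"
    unfolding zm_def using Max_in[OF assms(4) False] Max_ge[OF assms(4)] by auto
  obtain e where "e > 0" "ball zm e \<subseteq> U"
    using \<open>open U\<close> \<open>zm \<in> U\<close> open_contains_ball by blast
  define q where "q = zm + e/2"
  have "q \<in> U" using \<open>e > 0\<close> \<open>ball zm e \<subseteq> U\<close> by (auto simp: q_def dist_real_def)
  have below: "z < q" if "z \<in> U" "f z = 0" for z
    using zm_max[OF that] \<open>e > 0\<close> by (simp add: q_def)
  then have "f q \<noteq> 0" using \<open>q \<in> U\<close> by auto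
  have "{z \<in> U. f z = 0 \<and> z < q \<and> P z} = {z \<in> U. f z = 0 \<and> P z}" for P
    using below by blast
  with down_minus_up_crossings_below[OF assms \<open>q \<in> U\<close> \<open>f q \<noteq> 0\<close>] show ?thesis
    by (simp add: of_bool_def split: if_splits)
next
  case True
  then have "{z \<in> U. f z = 0 \<and> up_crossing f z} = {}" by blast
  then show ?thesis by (simp only: card.empty le0)
qed

lemma eventually_pos_at_right_power_sum:
  fixes P Q :: "real \<Rightarrow> real"
  assumes "a < b" "isCont P L" "isCont Q L" "P L > 0"
  shows "\<forall>\<^sub>F t in at_right L. (t - L) ^ a * P t + (t - L) ^ b * Q t > 0"
proof -
  define H where "H t = P t + (t - L) ^ (b - a) * Q t" for t
  have "isCont H L" unfolding H_def using assms(2,3) by (intro continuous_intros)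
  moreover have "H L > 0" using assms(1,4) by (simp add: H_def zero_power)
  ultimately have "\<forall>\<^sub>F t in at L. H t > 0" using order_tendstoD(1) isContD by blast
  then have "\<forall>\<^sub>F t in at_right L. H t > 0" by (simp add: eventually_at_split)
  then show ?thesis
  proof (rule eventually_elim2[OF _ eventually_at_right_less])
    fix t assume "H t > 0" "L < t"
    have "(t - L) ^ b = (t - L) ^ a * (t - L) ^ (b - a)"
      using assms(1) by (simp flip: power_add)
    then have "(t - L) ^ a * P t + (t - L) ^ b * Q t = (t - L) ^ a * H t"
      by (simp add: H_def algebra_simps)
    also have "\<dots> > 0" using \<open>H t > 0\<close> \<open>L < t\<close> by simp
    finally show "(t - L) ^ a * P t + (t - L) ^ b * Q t > 0" .
  qed
qed

section \<open>Steady states along a compatibility class\<close>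

text \<open>Since \<open>x\<^sub>i = A\<^sub>i x\<^sub>1 + B\<^sub>i\<close> on \<open>P\<^sub>c\<close>, the class is the image of \<open>class_point\<close>;
  \<open>class_dom\<close> is the set of parameters \<open>t = x\<^sub>1\<close> giving positive points.\<close>

definition class_point ::
    "nat \<Rightarrow> (nat \<Rightarrow> nat \<Rightarrow> nat) \<Rightarrow> (nat \<Rightarrow> nat \<Rightarrow> nat) \<Rightarrow> (nat \<Rightarrow> real) \<Rightarrow> real \<Rightarrow> nat \<Rightarrow> real" where
  "class_point s \<alpha> \<beta> c t = (\<lambda>i. if i \<in> {1..s} then coefA \<alpha> \<beta> i * t + coefB \<alpha> \<beta> c i else 0)"

definition class_dom :: "nat \<Rightarrow> (nat \<Rightarrow> nat \<Rightarrow> nat) \<Rightarrow> (nat \<Rightarrow> nat \<Rightarrow> nat) \<Rightarrow> (nat \<Rightarrow> real) \<Rightarrow> real set" where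
  "class_dom s \<alpha> \<beta> c = {t. \<forall>i\<in>{1..s}. 0 < coefA \<alpha> \<beta> i * t + coefB \<alpha> \<beta> c i}"

definition reactant_monomial :: "nat \<Rightarrow> (nat \<Rightarrow> nat \<Rightarrow> nat) \<Rightarrow> nat \<Rightarrow> (nat \<Rightarrow> real) \<Rightarrow> real" where
  "reactant_monomial s \<alpha> j x = (\<Prod>l\<in>{1..s}. x l ^ \<alpha> l j)"

definition reactant_monomial_partial ::
    "nat \<Rightarrow> (nat \<Rightarrow> nat \<Rightarrow> nat) \<Rightarrow> nat \<Rightarrow> nat \<Rightarrow> (nat \<Rightarrow> real) \<Rightarrow> real" where
  "reactant_monomial_partial s \<alpha> j k x =
     real (\<alpha> k j) * x k ^ (\<alpha> k j - 1) * (\<Prod>l\<in>{1..s} - {k}. x l ^ \<alpha> l j)"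

text \<open>If the second column of the stoichiometric matrix is \<open>\<theta>\<close> times the first one, then
  \<open>f(\<kappa>; x)\<close> is the first column times this scalar function.\<close>

definition reduced_rate :: "nat \<Rightarrow> (nat \<Rightarrow> nat \<Rightarrow> nat) \<Rightarrow> (nat \<Rightarrow> real) \<Rightarrow> real \<Rightarrow> (nat \<Rightarrow> real) \<Rightarrow> real" where
  "reduced_rate s \<alpha> \<kappa> \<theta> x = \<kappa> 1 * reactant_monomial s \<alpha> 1 x + \<theta> * \<kappa> 2 * reactant_monomial s \<alpha> 2 x"

definition reduced_rate_partial ::
    "nat \<Rightarrow> (nat \<Rightarrow> nat \<Rightarrow> nat) \<Rightarrow> (nat \<Rightarrow> real) \<Rightarrow> real \<Rightarrow> nat \<Rightarrow> (nat \<Rightarrow> real) \<Rightarrow> real" where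
  "reduced_rate_partial s \<alpha> \<kappa> \<theta> k x =
     \<kappa> 1 * reactant_monomial_partial s \<alpha> 1 k x + \<theta> * \<kappa> 2 * reactant_monomial_partial s \<alpha> 2 k x"

lemma coefA_1 [simp]: "coefA \<alpha> \<beta> 1 = 1" "coefA \<alpha> \<beta> (Suc 0) = 1"
  by (simp_all add: coefA_def)

lemma coefB_1 [simp]: "coefB \<alpha> \<beta> c 1 = 0" "coefB \<alpha> \<beta> c (Suc 0) = 0"
  by (simp_all add: coefB_def)

lemma stoich_eq_coefA: "stoich \<alpha> \<beta> 1 1 \<noteq> 0 \<Longrightarrow> stoich \<alpha> \<beta> i 1 = stoich \<alpha> \<beta> 1 1 * coefA \<alpha> \<beta> i"
  by (simp add: coefA_def)

lemma class_point_1 [simp]: "1 \<le> s \<Longrightarrow> class_point s \<alpha> \<beta> c t 1 = t"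
  by (simp add: class_point_def)

lemma inj_class_point: "1 \<le> s \<Longrightarrow> inj (class_point s \<alpha> \<beta> c)"
  by (rule injI) (metis class_point_1)

lemma compat_class_coord:
  assumes "stoich \<alpha> \<beta> 1 1 \<noteq> 0" "x \<in> compat_class s \<alpha> \<beta> c" "i \<in> {1..s}"
  shows "x i = coefA \<alpha> \<beta> i * x 1 + coefB \<alpha> \<beta> c i"
proof (cases "i = 1")
  case False
  then have "stoich \<alpha> \<beta> i 1 * x 1 - stoich \<alpha> \<beta> 1 1 * x i = c (i - 1)"
    using assms(2,3) unfolding compat_class_def by auto
  then show ?thesis using assms(1) False unfolding coefA_def coefB_def by (simp add: field_simps)
qed simp

lemma compat_class_eq_class_point:
  assumes "stoich \<alpha> \<beta> 1 1 \<noteq> 0" "x \<in> compat_class s \<alpha> \<beta> c"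
  shows "x = class_point s \<alpha> \<beta> c (x 1)"
proof
  fix i
  show "x i = class_point s \<alpha> \<beta> c (x 1) i"
    using compat_class_coord[OF assms, of i] assms(2)
    unfolding class_point_def compat_class_def by (cases "i \<in> {1..s}") auto
qed

lemma class_point_in_compat_class:
  assumes "stoich \<alpha> \<beta> 1 1 \<noteq> 0" "1 \<le> s" "t \<in> class_dom s \<alpha> \<beta> c"
  shows "class_point s \<alpha> \<beta> c t \<in> compat_class s \<alpha> \<beta> c"
  using assms by (auto simp: compat_class_def class_point_def class_dom_def coefA_def coefB_def
      less_imp_le field_simps)

lemma pos_steady_state_in_class_dom:
  assumes "stoich \<alpha> \<beta> 1 1 \<noteq> 0" "x \<in> pos_steady_states s \<alpha> \<beta> \<kappa> c"
  shows "x 1 \<in> class_dom s \<alpha> \<beta> c"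
proof -
  have "x \<in> compat_class s \<alpha> \<beta> c" "\<forall>i\<in>{1..s}. x i > 0"
    using assms(2) unfolding pos_steady_states_def by auto
  then show ?thesis
    using compat_class_coord[OF assms(1)] unfolding class_dom_def by simp
qed

lemma rfield_eq_monomials:
  "rfield s \<alpha> \<beta> \<kappa> x i = stoich \<alpha> \<beta> i 1 * (\<kappa> 1 * reactant_monomial s \<alpha> 1 x)
     + stoich \<alpha> \<beta> i 2 * (\<kappa> 2 * reactant_monomial s \<alpha> 2 x)"
  by (simp add: rfield_def reactant_monomial_def)

text \<open>At a positive steady state both reaction rates are positive and
  \<open>N\<^sub>i\<^sub>1 rate\<^sub>1 + N\<^sub>i\<^sub>2 rate\<^sub>2 = 0\<close> for every species.\<close>

lemma pos_steady_state_stoich_proportional: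
  assumes a0: "stoich \<alpha> \<beta> 1 1 \<noteq> 0" and "1 \<le> s" "\<kappa> 1 > 0" "\<kappa> 2 > 0"
    and x: "x \<in> pos_steady_states s \<alpha> \<beta> \<kappa> c"
  defines "\<theta> \<equiv> stoich \<alpha> \<beta> 1 2 / stoich \<alpha> \<beta> 1 1"
  shows "\<forall>i\<in>{1..s}. stoich \<alpha> \<beta> i 2 = \<theta> * stoich \<alpha> \<beta> i 1" and "\<theta> < 0"
proof -
  define r1 where "r1 = \<kappa> 1 * reactant_monomial s \<alpha> 1 x"
  define r2 where "r2 = \<kappa> 2 * reactant_monomial s \<alpha> 2 x"
  have "reactant_monomial s \<alpha> j x > 0" for j
    using x unfolding pos_steady_states_def reactant_monomial_def by (auto intro: prod_pos)
  then have "r1 > 0" "r2 > 0" unfolding r1_def r2_def using assms(3,4) by simp_all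
  have col2: "stoich \<alpha> \<beta> i 2 = - (r1 / r2) * stoich \<alpha> \<beta> i 1" if "i \<in> {1..s}" for i
  proof -
    have "stoich \<alpha> \<beta> i 1 * r1 + stoich \<alpha> \<beta> i 2 * r2 = 0"
      using x that rfield_eq_monomials[of s \<alpha> \<beta> \<kappa> x i]
      unfolding pos_steady_states_def r1_def r2_def by auto
    then show ?thesis using \<open>r2 > 0\<close> by (simp add: field_simps)
  qed
  have "\<theta> = - (r1 / r2)" using col2[of 1] \<open>1 \<le> s\<close> a0 unfolding \<theta>_def by simp
  then show "\<forall>i\<in>{1..s}. stoich \<alpha> \<beta> i 2 = \<theta> * stoich \<alpha> \<beta> i 1" and "\<theta> < 0"
    using col2 \<open>r1 > 0\<close> \<open>r2 > 0\<close> by auto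
qed

lemma rfield_eq_reduced_rate:
  assumes "\<forall>i\<in>{1..s}. stoich \<alpha> \<beta> i 2 = \<theta> * stoich \<alpha> \<beta> i 1" "i \<in> {1..s}"
  shows "rfield s \<alpha> \<beta> \<kappa> x i = stoich \<alpha> \<beta> i 1 * reduced_rate s \<alpha> \<kappa> \<theta> x"
  using assms unfolding rfield_eq_monomials reduced_rate_def by (simp add: algebra_simps)

lemma pos_steady_states_eq_image:
  assumes a0: "stoich \<alpha> \<beta> 1 1 \<noteq> 0" and "1 \<le> s"
    and cols: "\<forall>i\<in>{1..s}. stoich \<alpha> \<beta> i 2 = \<theta> * stoich \<alpha> \<beta> i 1"
  shows "pos_steady_states s \<alpha> \<beta> \<kappa> c =
    class_point s \<alpha> \<beta> c ` {t \<in> class_dom s \<alpha> \<beta> c. reduced_rate s \<alpha> \<kappa> \<theta> (class_point s \<alpha> \<beta> c t) = 0}"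
proof (intro set_eqI iffI)
  fix x assume x: "x \<in> pos_steady_states s \<alpha> \<beta> \<kappa> c"
  then have x_eq: "x = class_point s \<alpha> \<beta> c (x 1)"
    using compat_class_eq_class_point[OF a0] unfolding pos_steady_states_def by blast
  have "rfield s \<alpha> \<beta> \<kappa> x 1 = 0" using x \<open>1 \<le> s\<close> unfolding pos_steady_states_def by simp
  then have "reduced_rate s \<alpha> \<kappa> \<theta> x = 0"
    using rfield_eq_reduced_rate[OF cols, of 1] \<open>1 \<le> s\<close> a0 by simp
  then show "x \<in> class_point s \<alpha> \<beta> c `
      {t \<in> class_dom s \<alpha> \<beta> c. reduced_rate s \<alpha> \<kappa> \<theta> (class_point s \<alpha> \<beta> c t) = 0}"
    using pos_steady_state_in_class_dom[OF a0 x] x_eq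
    by (metis (mono_tags, lifting) image_eqI mem_Collect_eq)
next
  fix x assume "x \<in> class_point s \<alpha> \<beta> c `
    {t \<in> class_dom s \<alpha> \<beta> c. reduced_rate s \<alpha> \<kappa> \<theta> (class_point s \<alpha> \<beta> c t) = 0}"
  then obtain t where t: "t \<in> class_dom s \<alpha> \<beta> c" "reduced_rate s \<alpha> \<kappa> \<theta> (class_point s \<alpha> \<beta> c t) = 0"
    and x: "x = class_point s \<alpha> \<beta> c t" by auto
  have "x \<in> compat_class s \<alpha> \<beta> c" using class_point_in_compat_class[OF a0 \<open>1 \<le> s\<close> t(1)] x by simp
  moreover have "\<forall>i\<in>{1..s}. x i > 0" using t(1) x unfolding class_dom_def class_point_def by simp
  moreover have "\<forall>i\<in>{1..s}. rfield s \<alpha> \<beta> \<kappa> x i = 0" using rfield_eq_reduced_rate[OF cols] t(2) x by simp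
  ultimately show "x \<in> pos_steady_states s \<alpha> \<beta> \<kappa> c" unfolding pos_steady_states_def by simp
qed

lemma finite_pos_steady_states_if_cap:
  assumes "cap_pos s \<alpha> \<beta> = enat n" "\<kappa> 1 > 0" "\<kappa> 2 > 0"
  shows "finite (pos_steady_states s \<alpha> \<beta> \<kappa> c)" "card (pos_steady_states s \<alpha> \<beta> \<kappa> c) \<le> n"
proof -
  have "ecard (pos_steady_states s \<alpha> \<beta> \<kappa> c) \<le> cap_pos s \<alpha> \<beta>"
    unfolding cap_pos_def by (rule Sup_upper) (use assms(2,3) in blast)
  then show "finite (pos_steady_states s \<alpha> \<beta> \<kappa> c)" "card (pos_steady_states s \<alpha> \<beta> \<kappa> c) \<le> n"
    using assms(1) unfolding ecard_def by (auto split: if_splits)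
qed

lemma open_class_dom: "open (class_dom s \<alpha> \<beta> c)"
proof -
  have "class_dom s \<alpha> \<beta> c = (\<Inter>i\<in>{1..s}. {t. 0 < coefA \<alpha> \<beta> i * t + coefB \<alpha> \<beta> c i})"
    unfolding class_dom_def by auto
  moreover have "open {t::real. 0 < coefA \<alpha> \<beta> i * t + coefB \<alpha> \<beta> c i}" for i
    by (intro open_Collect_less continuous_intros)
  ultimately show ?thesis by auto
qed

lemma is_interval_class_dom: "is_interval (class_dom s \<alpha> \<beta> c)"
proof -
  have "0 < a * z + b" if "0 < a * x + b" "0 < a * y + b" "x \<le> z" "z \<le> y" for a b x y z :: real
  proof (cases "a \<ge> 0")
    case True
    then show ?thesis using that mult_left_mono[of x z a] by linarith
  next
    case False
    then show ?thesis using that mult_left_mono_neg[of z y a] by linarith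
  qed
  then show ?thesis unfolding is_interval_1 class_dom_def by blast
qed

lemma reactant_monomial_upd:
  assumes "k \<in> {1..s}"
  shows "reactant_monomial s \<alpha> j (x(k := u)) = u ^ \<alpha> k j * (\<Prod>l\<in>{1..s} - {k}. x l ^ \<alpha> l j)"
proof -
  have "reactant_monomial s \<alpha> j (x(k := u))
      = (x(k := u)) k ^ \<alpha> k j * (\<Prod>l\<in>{1..s} - {k}. (x(k := u)) l ^ \<alpha> l j)"
    unfolding reactant_monomial_def by (rule prod.remove[OF finite_atLeastAtMost assms])
  also have "(\<Prod>l\<in>{1..s} - {k}. (x(k := u)) l ^ \<alpha> l j) = (\<Prod>l\<in>{1..s} - {k}. x l ^ \<alpha> l j)"
    by (rule prod.cong) auto
  finally show ?thesis by (simp only: fun_upd_same)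
qed

lemma reactant_monomial_has_partial_derivative:
  assumes "k \<in> {1..s}"
  shows "((\<lambda>u. reactant_monomial s \<alpha> j (x(k := u))) has_real_derivative
           reactant_monomial_partial s \<alpha> j k x) (at (x k))"
  unfolding reactant_monomial_upd[OF assms] reactant_monomial_partial_def
  by (rule derivative_eq_intros refl | simp)+

lemma reactant_monomial_class_point_has_derivative:
  "((\<lambda>t. reactant_monomial s \<alpha> j (class_point s \<alpha> \<beta> c t)) has_real_derivative
     (\<Sum>k\<in>{1..s}. coefA \<alpha> \<beta> k * reactant_monomial_partial s \<alpha> j k (class_point s \<alpha> \<beta> c t))) (at t)"
proof -
  define A where "A = coefA \<alpha> \<beta>"
  define B where "B = coefB \<alpha> \<beta> c"
  have "((\<lambda>t. \<Prod>l\<in>{1..s}. (A l * t + B l) ^ \<alpha> l j) has_real_derivative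
      (\<Sum>k\<in>{1..s}. (real (\<alpha> k j) * (A k * (A k * t + B k) ^ (\<alpha> k j - 1))) *
         (\<Prod>l\<in>{1..s} - {k}. (A l * t + B l) ^ \<alpha> l j))) (at t)"
    by (rule has_field_derivative_prod) (rule derivative_eq_intros refl | simp)+
  moreover have "(\<lambda>t. reactant_monomial s \<alpha> j (class_point s \<alpha> \<beta> c t))
      = (\<lambda>t. \<Prod>l\<in>{1..s}. (A l * t + B l) ^ \<alpha> l j)"
    unfolding reactant_monomial_def class_point_def A_def B_def by (intro ext prod.cong) auto
  moreover have prod_eq: "(\<Prod>l\<in>{1..s} - {k}. class_point s \<alpha> \<beta> c t l ^ \<alpha> l j)
      = (\<Prod>l\<in>{1..s} - {k}. (A l * t + B l) ^ \<alpha> l j)" for k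
    unfolding class_point_def A_def B_def by (rule prod.cong) auto
  have "(\<Sum>k\<in>{1..s}. (real (\<alpha> k j) * (A k * (A k * t + B k) ^ (\<alpha> k j - 1))) *
         (\<Prod>l\<in>{1..s} - {k}. (A l * t + B l) ^ \<alpha> l j))
      = (\<Sum>k\<in>{1..s}. A k * reactant_monomial_partial s \<alpha> j k (class_point s \<alpha> \<beta> c t))"
  proof (rule sum.cong[OF refl])
    fix k assume "k \<in> {1..s}"
    then show "(real (\<alpha> k j) * (A k * (A k * t + B k) ^ (\<alpha> k j - 1))) *
         (\<Prod>l\<in>{1..s} - {k}. (A l * t + B l) ^ \<alpha> l j)
      = A k * reactant_monomial_partial s \<alpha> j k (class_point s \<alpha> \<beta> c t)"
      unfolding reactant_monomial_partial_def prod_eq by (simp add: class_point_def A_def B_def)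
  qed
  ultimately show ?thesis unfolding A_def by simp
qed

lemma reduced_rate_class_point_has_derivative:
  "((\<lambda>t. reduced_rate s \<alpha> \<kappa> \<theta> (class_point s \<alpha> \<beta> c t)) has_real_derivative
     (\<Sum>k\<in>{1..s}. coefA \<alpha> \<beta> k * reduced_rate_partial s \<alpha> \<kappa> \<theta> k (class_point s \<alpha> \<beta> c t))) (at t)"
  unfolding reduced_rate_def reduced_rate_partial_def
  by (rule derivative_eq_intros reactant_monomial_class_point_has_derivative refl)+
    (simp add: sum_distrib_left sum.distrib algebra_simps)

lemma jac_eq_reduced_rate_partial:
  assumes "\<forall>i\<in>{1..s}. stoich \<alpha> \<beta> i 2 = \<theta> * stoich \<alpha> \<beta> i 1" "i \<in> {1..s}" "k \<in> {1..s}"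
  shows "jac s \<alpha> \<beta> \<kappa> x i k = stoich \<alpha> \<beta> i 1 * reduced_rate_partial s \<alpha> \<kappa> \<theta> k x"
proof -
  have "((\<lambda>u. rfield s \<alpha> \<beta> \<kappa> (x(k := u)) i) has_real_derivative
      stoich \<alpha> \<beta> i 1 * (\<kappa> 1 * reactant_monomial_partial s \<alpha> 1 k x)
      + stoich \<alpha> \<beta> i 2 * (\<kappa> 2 * reactant_monomial_partial s \<alpha> 2 k x)) (at (x k))"
    unfolding rfield_eq_monomials
    by (intro DERIV_add DERIV_cmult reactant_monomial_has_partial_derivative[OF assms(3)])
  then show ?thesis
    using assms(1,2) unfolding jac_def reduced_rate_partial_def
    by (simp add: DERIV_imp_deriv algebra_simps)
qed

lemma mat_app_scale: "mat_app s M (\<lambda>i. \<rho> * v i) = (\<lambda>i. \<rho> * mat_app s M v i)"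
  unfolding mat_app_def by (auto simp: sum_distrib_left algebra_simps)

lemma is_eigenvalue_of_real:
  assumes "mat_app s M v = (\<lambda>i. \<mu> * v i)" "i0 \<in> {1..s}" "v i0 \<noteq> 0"
  shows "is_eigenvalue s M (complex_of_real \<mu>)"
  unfolding is_eigenvalue_def
proof (intro exI[of _ "\<lambda>i. complex_of_real (v i)"] conjI ballI)
  show "\<exists>i\<in>{1..s}. complex_of_real (v i) \<noteq> 0" using assms(2,3) by auto
next
  fix i assume "i \<in> {1..s}"
  then have "complex_of_real (\<Sum>k\<in>{1..s}. M i k * v k) = complex_of_real (\<mu> * v i)"
    using fun_cong[OF assms(1), of i] by (simp add: mat_app_def)
  then show "(\<Sum>k\<in>{1..s}. complex_of_real (M i k) * complex_of_real (v k))
      = complex_of_real \<mu> * complex_of_real (v i)"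
    by simp
qed

definition stoich_col1 :: "nat \<Rightarrow> (nat \<Rightarrow> nat \<Rightarrow> nat) \<Rightarrow> (nat \<Rightarrow> nat \<Rightarrow> nat) \<Rightarrow> nat \<Rightarrow> real" where
  "stoich_col1 s \<alpha> \<beta> i = (if i \<in> {1..s} then stoich \<alpha> \<beta> i 1 else 0)"

lemma stoich_space_eq_span_col1:
  assumes "\<forall>i\<in>{1..s}. stoich \<alpha> \<beta> i 2 = \<theta> * stoich \<alpha> \<beta> i 1"
  shows "stoich_space s \<alpha> \<beta> = range (\<lambda>\<rho> i. \<rho> * stoich_col1 s \<alpha> \<beta> i)"
proof (intro set_eqI iffI)
  fix w assume "w \<in> stoich_space s \<alpha> \<beta>"
  then obtain a b where "\<forall>i. w i = (if i \<in> {1..s} then a * stoich \<alpha> \<beta> i 1 + b * stoich \<alpha> \<beta> i 2 else 0)"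
    unfolding stoich_space_def by blast
  then have "w = (\<lambda>i. (a + b * \<theta>) * stoich_col1 s \<alpha> \<beta> i)"
    using assms by (auto simp: stoich_col1_def algebra_simps)
  then show "w \<in> range (\<lambda>\<rho> i. \<rho> * stoich_col1 s \<alpha> \<beta> i)" by blast
next
  fix w assume "w \<in> range (\<lambda>\<rho> i. \<rho> * stoich_col1 s \<alpha> \<beta> i)"
  then obtain \<rho> where "w = (\<lambda>i. \<rho> * stoich_col1 s \<alpha> \<beta> i)" by blast
  then show "w \<in> stoich_space s \<alpha> \<beta>"
    unfolding stoich_space_def stoich_col1_def by (intro CollectI exI[of _ \<rho>] exI[of _ 0]) simp
qed

lemma jac_stoich_col1:
  assumes a0: "stoich \<alpha> \<beta> 1 1 \<noteq> 0"
    and cols: "\<forall>i\<in>{1..s}. stoich \<alpha> \<beta> i 2 = \<theta> * stoich \<alpha> \<beta> i 1"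
    and D: "((\<lambda>t. reduced_rate s \<alpha> \<kappa> \<theta> (class_point s \<alpha> \<beta> c t)) has_real_derivative D) (at t)"
  shows "mat_app s (jac s \<alpha> \<beta> \<kappa> (class_point s \<alpha> \<beta> c t)) (stoich_col1 s \<alpha> \<beta>)
    = (\<lambda>i. stoich \<alpha> \<beta> 1 1 * D * stoich_col1 s \<alpha> \<beta> i)"
proof
  fix i
  define P where "P k = reduced_rate_partial s \<alpha> \<kappa> \<theta> k (class_point s \<alpha> \<beta> c t)" for k
  have D_eq: "D = (\<Sum>k\<in>{1..s}. coefA \<alpha> \<beta> k * P k)"
    unfolding P_def using DERIV_unique[OF D reduced_rate_class_point_has_derivative] .
  show "mat_app s (jac s \<alpha> \<beta> \<kappa> (class_point s \<alpha> \<beta> c t)) (stoich_col1 s \<alpha> \<beta>) i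
      = stoich \<alpha> \<beta> 1 1 * D * stoich_col1 s \<alpha> \<beta> i"
  proof (cases "i \<in> {1..s}")
    case True
    have "jac s \<alpha> \<beta> \<kappa> (class_point s \<alpha> \<beta> c t) i k * stoich_col1 s \<alpha> \<beta> k
        = stoich \<alpha> \<beta> i 1 * stoich \<alpha> \<beta> 1 1 * (coefA \<alpha> \<beta> k * P k)" if "k \<in> {1..s}" for k
      using jac_eq_reduced_rate_partial[OF cols True that] stoich_eq_coefA[OF a0, of k] that
      unfolding stoich_col1_def P_def by simp
    then show ?thesis
      using True unfolding mat_app_def stoich_col1_def D_eq by (simp add: sum_distrib_left algebra_simps)
  next
    case False
    then show ?thesis by (auto simp: mat_app_def stoich_col1_def)
  qed
qed

text \<open>On the line \<open>S\<close> spanned by the first column of the stoichiometric matrix, the Jacobian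
  acts as multiplication by \<open>(\<beta>\<^sub>1\<^sub>1 - \<alpha>\<^sub>1\<^sub>1) D\<close>: nondegeneracy makes this nonzero,
  stability makes it negative.\<close>

lemma stable_imp_reduced_rate_deriv_sign:
  assumes a0: "stoich \<alpha> \<beta> 1 1 \<noteq> 0" and "1 \<le> s"
    and cols: "\<forall>i\<in>{1..s}. stoich \<alpha> \<beta> i 2 = \<theta> * stoich \<alpha> \<beta> i 1"
    and D: "((\<lambda>t. reduced_rate s \<alpha> \<kappa> \<theta> (class_point s \<alpha> \<beta> c t)) has_real_derivative D) (at t)"
    and stable: "stable s \<alpha> \<beta> \<kappa> (class_point s \<alpha> \<beta> c t)"
  shows "stoich \<alpha> \<beta> 1 1 * D < 0"
proof -
  define J where "J = jac s \<alpha> \<beta> \<kappa> (class_point s \<alpha> \<beta> c t)"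
  define v where "v = stoich_col1 s \<alpha> \<beta>"
  define \<mu> where "\<mu> = stoich \<alpha> \<beta> 1 1 * D"
  have Jv: "mat_app s J v = (\<lambda>i. \<mu> * v i)"
    unfolding J_def v_def \<mu>_def by (rule jac_stoich_col1[OF a0 cols D])
  have "v 1 \<noteq> 0" using a0 \<open>1 \<le> s\<close> by (simp add: v_def stoich_col1_def)
  have "v \<in> range (\<lambda>\<rho> i. \<rho> * v i)" by (rule range_eqI[of _ _ 1]) simp
  then have "v \<in> mat_app s J ` range (\<lambda>\<rho> i. \<rho> * v i)"
    using stable stoich_space_eq_span_col1[OF cols]
    unfolding stable_def nondegenerate_def J_def v_def by simp
  then obtain w \<rho> where v_eq: "v = mat_app s J w" and w_eq: "w = (\<lambda>i. \<rho> * v i)" by blast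
  have "v = mat_app s J (\<lambda>i. \<rho> * v i)" unfolding w_eq[symmetric] by (rule v_eq)
  also have "\<dots> = (\<lambda>i. \<rho> * (\<mu> * v i))" using Jv unfolding mat_app_scale by simp
  finally have "v 1 = \<rho> * (\<mu> * v 1)" by (rule fun_cong)
  with \<open>v 1 \<noteq> 0\<close> have "\<mu> \<noteq> 0" by (metis mult_zero_left mult_zero_right)
  moreover have "is_eigenvalue s J (complex_of_real \<mu>)"
    using is_eigenvalue_of_real[OF Jv _ \<open>v 1 \<noteq> 0\<close>] \<open>1 \<le> s\<close> by simp
  moreover have "\<forall>z. is_eigenvalue s J z \<and> z \<noteq> 0 \<longrightarrow> Re z < 0"
    using stable unfolding stable_def J_def by blast
  ultimately have "Re (complex_of_real \<mu>) < 0" by (metis of_real_eq_0_iff)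
  then show ?thesis by (simp add: \<mu>_def)
qed

section \<open>The class of \<open>\<tau>\<close>\<close>

lemma gam_diff_eq:
  "gam s \<alpha> \<beta> c k 1 - gam s \<alpha> \<beta> c k 2
     = int (\<Sum>i\<in>sp_class s \<alpha> \<beta> c k. \<alpha> i 1) - int (\<Sum>i\<in>sp_class s \<alpha> \<beta> c k. \<alpha> i 2)"
  by (simp add: gam_def)

text \<open>\<open>vanish i = -B\<^sub>i/A\<^sub>i\<close> is the parameter at which coordinate \<open>i\<close> vanishes, so the classes
  \<open>[i]\<close> with \<open>A\<^sub>i \<noteq> 0\<close> are the level sets of \<open>vanish\<close>; \<open>class_degree k j - \<phi>\<^sub>k\<close> is
  \<open>\<gamma>\<^sub>k\<^sub>j\<close>, and the neutral species are those with \<open>A\<^sub>i > 0\<close> and \<open>\<gamma>\<^sub>i\<^sub>1 = \<gamma>\<^sub>i\<^sub>2\<close>.\<close>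

locale leftmost_class =
  fixes s r :: nat and \<alpha> \<beta> :: "nat \<Rightarrow> nat \<Rightarrow> nat" and c :: "nat \<Rightarrow> real" and \<tau> :: nat
  assumes one_le_s: "1 \<le> s"
    and stoich_11: "stoich \<alpha> \<beta> 1 1 \<noteq> 0"
    and reps: "class_reps s \<alpha> \<beta> c r"
    and one_in_H: "1 \<in> Hset s \<alpha> \<beta> c r"
    and tau: "is_tau s \<alpha> \<beta> c r \<tau>"
    and dom_nonempty: "class_dom s \<alpha> \<beta> c \<noteq> {}"
begin

abbreviation "A \<equiv> coefA \<alpha> \<beta>"
abbreviation "B \<equiv> coefB \<alpha> \<beta> c"

definition vanish :: "nat \<Rightarrow> real" where
  "vanish i = - B i / A i"

definition class_degree :: "nat \<Rightarrow> nat \<Rightarrow> nat" where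
  "class_degree k j = (\<Sum>i\<in>sp_class s \<alpha> \<beta> c k. \<alpha> i j)"

definition neutral :: "nat set" where
  "neutral = {i \<in> {1..s}. A i > 0 \<and> class_degree i 1 = class_degree i 2}"

definition left_end :: real where
  "left_end = vanish \<tau>"

lemma affine_eq_vanish: "A i \<noteq> 0 \<Longrightarrow> A i * t + B i = A i * (t - vanish i)"
  by (simp add: vanish_def algebra_simps)

lemma sp_class_eq: "A k \<noteq> 0 \<Longrightarrow> sp_class s \<alpha> \<beta> c k = {i \<in> {1..s}. A i \<noteq> 0 \<and> vanish i = vanish k}"
  unfolding sp_class_def vanish_def by auto

lemma mem_sp_class:
  assumes "A k \<noteq> 0" "i \<in> sp_class s \<alpha> \<beta> c k"
  shows "i \<in> {1..s}" "A i \<noteq> 0" "vanish i = vanish k" "sp_class s \<alpha> \<beta> c i = sp_class s \<alpha> \<beta> c k"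
  using assms sp_class_eq[of k] sp_class_eq[of i] by auto

lemma class_dom_coord_pos: "t \<in> class_dom s \<alpha> \<beta> c \<Longrightarrow> i \<in> {1..s} \<Longrightarrow> 0 < A i * t + B i"
  by (simp add: class_dom_def)

lemma coefA_pos_if_same_vanish:
  assumes "i \<in> {1..s}" "k \<in> {1..s}" "A i > 0" "A k \<noteq> 0" "vanish k = vanish i"
  shows "A k > 0"
proof -
  obtain t where t: "t \<in> class_dom s \<alpha> \<beta> c" using dom_nonempty by blast
  have "0 < A i * (t - vanish i)"
    using class_dom_coord_pos[OF t assms(1)] affine_eq_vanish[of i] assms(3) by simp
  then have "t - vanish i > 0" using assms(3) by (simp add: zero_less_mult_iff)
  moreover have "0 < A k * (t - vanish k)"
    using class_dom_coord_pos[OF t assms(2)] affine_eq_vanish[OF assms(4)] by simp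
  ultimately show ?thesis using assms(5) by (simp add: zero_less_mult_iff)
qed

lemma gam_eq_iff: "gam s \<alpha> \<beta> c k 1 = gam s \<alpha> \<beta> c k 2 \<longleftrightarrow> class_degree k 1 = class_degree k 2"
proof -
  have "gam s \<alpha> \<beta> c k 1 - gam s \<alpha> \<beta> c k 2 = int (class_degree k 1) - int (class_degree k 2)"
    unfolding class_degree_def by (rule gam_diff_eq)
  then show ?thesis by linarith
qed

lemma r_le_s: "r \<le> s"
  using reps unfolding class_reps_def by blast

lemma Hset_iff:
  "k \<in> Hset s \<alpha> \<beta> c r \<longleftrightarrow> k \<in> {1..r} \<and> A k \<noteq> 0 \<and> class_degree k 1 \<noteq> class_degree k 2"
  using r_le_s unfolding Hset_def Jset_def gam_eq_iff by auto

lemma one_notin_neutral: "1 \<notin> neutral"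
  using one_in_H unfolding Hset_iff neutral_def by simp

lemma tau_in_H: "\<tau> \<in> Hset s \<alpha> \<beta> c r" and coefA_tau_pos: "A \<tau> > 0"
  and Iset_nonempty: "Iset s \<alpha> \<beta> c r \<noteq> {}" and left_end_eq_Inf: "left_end = Inf (Iset s \<alpha> \<beta> c r)"
  using tau unfolding is_tau_def left_end_def vanish_def by auto

lemma tau_range: "\<tau> \<in> {1..s}"
  using tau_in_H r_le_s unfolding Hset_iff by auto

text \<open>This is where the choice of \<open>\<tau>\<close> as the left endpoint of \<open>I\<close> enters.\<close>

lemma vanish_le_left_end:
  assumes i: "i \<in> {1..s}" and "A i > 0" "i \<notin> neutral"
  shows "vanish i \<le> left_end"
proof -
  obtain k where k: "k \<in> {1..r}" "i \<in> sp_class s \<alpha> \<beta> c k"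
    using reps i unfolding class_reps_def by blast
  have "k \<in> {1..s}" using k(1) r_le_s by auto
  have "A k \<noteq> 0" using k(2) \<open>A i > 0\<close> unfolding sp_class_def by (auto split: if_splits)
  note ik = mem_sp_class[OF this k(2)]
  have "class_degree k 1 \<noteq> class_degree k 2"
    using assms ik(4) unfolding neutral_def class_degree_def by auto
  then have "k \<in> Hset s \<alpha> \<beta> c r" using k(1) \<open>A k \<noteq> 0\<close> unfolding Hset_iff by simp
  have "A k > 0" using coefA_pos_if_same_vanish[OF i \<open>k \<in> {1..s}\<close> \<open>A i > 0\<close> \<open>A k \<noteq> 0\<close>] ik(3) by simp
  have "vanish i \<le> x" if "x \<in> Iset s \<alpha> \<beta> c r" for x
  proof -
    have "x \<in> Ival \<alpha> \<beta> c k" using that \<open>k \<in> Hset s \<alpha> \<beta> c r\<close> unfolding Iset_def by blast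
    then show ?thesis using \<open>A k > 0\<close> ik(3) unfolding Ival_def vanish_def by simp
  qed
  then show ?thesis unfolding left_end_eq_Inf using Iset_nonempty by (rule cInf_greatest[rotated])
qed

lemma mem_tau_class:
  assumes "i \<in> sp_class s \<alpha> \<beta> c \<tau>"
  shows "i \<in> {1..s}" "A i > 0" "vanish i = left_end" "i \<notin> neutral"
proof -
  have "A \<tau> \<noteq> 0" using coefA_tau_pos by simp
  note i\<tau> = mem_sp_class[OF this assms]
  show "i \<in> {1..s}" "vanish i = left_end" using i\<tau> by (simp_all add: left_end_def)
  show "A i > 0" using coefA_pos_if_same_vanish[OF tau_range i\<tau>(1) coefA_tau_pos i\<tau>(2)] i\<tau>(3) by simp
  show "i \<notin> neutral"
    using i\<tau>(4) tau_in_H unfolding Hset_iff neutral_def class_degree_def by auto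
qed

lemma vanish_less_left_end:
  assumes "i \<in> {1..s}" "A i > 0" "i \<notin> neutral" "i \<notin> sp_class s \<alpha> \<beta> c \<tau>"
  shows "vanish i < left_end"
proof -
  have "vanish i \<noteq> left_end"
    using assms(1,2,4) sp_class_eq[of \<tau>] coefA_tau_pos unfolding left_end_def by auto
  then show ?thesis using vanish_le_left_end[OF assms(1-3)] by simp
qed

lemma left_end_less: "t \<in> class_dom s \<alpha> \<beta> c \<Longrightarrow> left_end < t"
  using class_dom_coord_pos[OF _ tau_range] affine_eq_vanish[of \<tau>] coefA_tau_pos
  by (simp add: left_end_def zero_less_mult_iff)

text \<open>New total constants moving the zero of every neutral coordinate to \<open>left_end - 1\<close>
  (recall \<open>B\<^sub>i = -c\<^sub>i\<^sub>-\<^sub>1 / (\<beta>\<^sub>1\<^sub>1 - \<alpha>\<^sub>1\<^sub>1)\<close>).  The class domain then reaches down to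
  \<open>left_end\<close>, where only the coordinates of \<open>[\<tau>]\<close> vanish.\<close>

definition shift_c :: "nat \<Rightarrow> real" where
  "shift_c j = (if Suc j \<in> neutral then stoich \<alpha> \<beta> 1 1 * A (Suc j) * (left_end - 1) else c j)"

lemma coefB_shift_c:
  assumes "i \<in> {1..s}"
  shows "coefB \<alpha> \<beta> shift_c i = (if i \<in> neutral then - A i * (left_end - 1) else B i)"
proof (cases "i = 1")
  case False
  then have "Suc (i - 1) = i" using assms by simp
  then show ?thesis using False stoich_11 unfolding coefB_def shift_c_def by simp
qed (use one_notin_neutral in simp)

lemma class_point_shift_c:
  assumes "i \<in> {1..s}"
  shows "class_point s \<alpha> \<beta> shift_c t i
    = (if i \<in> neutral then A i * (t - (left_end - 1)) else A i * t + B i)"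
  using assms coefB_shift_c[OF assms] by (simp add: class_point_def algebra_simps)

lemma neutral_range: "neutral \<subseteq> {1..s}" and coefA_pos_if_neutral: "i \<in> neutral \<Longrightarrow> A i > 0"
  unfolding neutral_def by auto

lemma shifted_coord_pos:
  assumes i: "i \<in> {1..s}" "i \<notin> sp_class s \<alpha> \<beta> c \<tau>"
    and d: "d \<in> class_dom s \<alpha> \<beta> c" and t: "left_end \<le> t" "t \<le> d"
  shows "0 < class_point s \<alpha> \<beta> shift_c t i"
proof (cases "i \<in> neutral")
  case True
  then show ?thesis using class_point_shift_c[OF i(1)] coefA_pos_if_neutral t by simp
next
  case False
  have "0 < A i * t + B i"
  proof (cases "A i > 0")
    case True
    have "vanish i < t" using vanish_less_left_end[OF i(1) True False i(2)] t(1) by simp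
    then show ?thesis using True affine_eq_vanish[of i t] by simp
  next
    case False
    then have "A i * d \<le> A i * t" using t(2) by (simp add: mult_left_mono_neg)
    then show ?thesis using class_dom_coord_pos[OF d i(1)] by linarith
  qed
  then show ?thesis using class_point_shift_c[OF i(1)] False by simp
qed

lemma class_dom_shift_c:
  assumes d: "d \<in> class_dom s \<alpha> \<beta> c" and t: "left_end < t" "t \<le> d"
  shows "t \<in> class_dom s \<alpha> \<beta> shift_c"
  unfolding class_dom_def
proof (intro CollectI ballI)
  fix i assume i: "i \<in> {1..s}"
  have "0 < class_point s \<alpha> \<beta> shift_c t i"
  proof (cases "i \<in> sp_class s \<alpha> \<beta> c \<tau>")
    case True
    note i\<tau> = mem_tau_class[OF True]
    then show ?thesis using class_point_shift_c[OF i] affine_eq_vanish[of i t] t(1) by simp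
  qed (use shifted_coord_pos[OF i _ d] t in simp)
  then show "0 < A i * t + coefB \<alpha> \<beta> shift_c i" using i by (simp add: class_point_def)
qed

lemma class_dom_subset_shift_c: "class_dom s \<alpha> \<beta> c \<subseteq> class_dom s \<alpha> \<beta> shift_c"
  using class_dom_shift_c left_end_less by blast

lemma neutral_vanish_class:
  assumes "i0 \<in> neutral"
  shows "{i \<in> neutral. vanish i = vanish i0} = sp_class s \<alpha> \<beta> c i0"
proof (intro set_eqI iffI)
  have "A i0 \<noteq> 0" using coefA_pos_if_neutral[OF assms] by simp
  fix i
  show "i \<in> sp_class s \<alpha> \<beta> c i0" if "i \<in> {i \<in> neutral. vanish i = vanish i0}"
    using that sp_class_eq[OF \<open>A i0 \<noteq> 0\<close>] neutral_range coefA_pos_if_neutral by force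
  show "i \<in> {i \<in> neutral. vanish i = vanish i0}" if i: "i \<in> sp_class s \<alpha> \<beta> c i0"
  proof -
    note ii0 = mem_sp_class[OF \<open>A i0 \<noteq> 0\<close> i]
    have "A i > 0"
      using coefA_pos_if_same_vanish[OF _ ii0(1) coefA_pos_if_neutral[OF assms] ii0(2) ii0(3)]
        assms neutral_range by auto
    then show ?thesis using ii0 assms unfolding neutral_def class_degree_def by simp
  qed
qed

text \<open>Grouping the neutral coordinates by their zero, each group is a whole class, whose degrees
  in the two reactants agree.\<close>

lemma prod_neutral_degree_eq:
  fixes \<phi> :: "real \<Rightarrow> real"
  shows "(\<Prod>i\<in>neutral. \<phi> (vanish i) ^ \<alpha> i 1) = (\<Prod>i\<in>neutral. \<phi> (vanish i) ^ \<alpha> i 2)"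
proof -
  have "finite neutral" using neutral_range finite_subset by blast
  have grouped: "(\<Prod>i\<in>neutral. \<phi> (vanish i) ^ \<alpha> i j)
      = (\<Prod>y\<in>vanish ` neutral. \<phi> y ^ (\<Sum>i\<in>{i \<in> neutral. vanish i = y}. \<alpha> i j))" for j
  proof -
    have "(\<Prod>i\<in>neutral. \<phi> (vanish i) ^ \<alpha> i j)
        = (\<Prod>y\<in>vanish ` neutral. \<Prod>i\<in>{i \<in> neutral. vanish i = y}. \<phi> (vanish i) ^ \<alpha> i j)"
      by (rule prod.group[symmetric]) (use \<open>finite neutral\<close> in auto)
    also have "\<dots> = (\<Prod>y\<in>vanish ` neutral. \<phi> y ^ (\<Sum>i\<in>{i \<in> neutral. vanish i = y}. \<alpha> i j))"
      by (intro prod.cong refl) (simp add: power_sum)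
    finally show ?thesis .
  qed
  have "(\<Sum>i\<in>{i \<in> neutral. vanish i = y}. \<alpha> i 1) = (\<Sum>i\<in>{i \<in> neutral. vanish i = y}. \<alpha> i 2)"
    if y: "y \<in> vanish ` neutral" for y
  proof -
    obtain i0 where "i0 \<in> neutral" "y = vanish i0" using y by blast
    then show ?thesis
      using neutral_vanish_class[of i0] unfolding neutral_def class_degree_def by auto
  qed
  then show ?thesis unfolding grouped by (intro prod.cong refl) simp
qed

lemma reduced_rate_shift_c:
  assumes t: "t \<in> class_dom s \<alpha> \<beta> c"
  obtains \<rho> where "\<rho> > 0"
    "reduced_rate s \<alpha> \<kappa> \<theta> (class_point s \<alpha> \<beta> c t) = \<rho> * reduced_rate s \<alpha> \<kappa> \<theta> (class_point s \<alpha> \<beta> shift_c t)"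
proof -
  define u where "u y = (t - y) / (t - (left_end - 1))" for y
  define W where "W j = (\<Prod>i\<in>neutral. u (vanish i) ^ \<alpha> i j)" for j
  have "left_end < t" using left_end_less[OF t] .
  have u_pos: "u (vanish i) > 0" if "i \<in> neutral" for i
  proof -
    have "0 < A i * (t - vanish i)"
      using class_dom_coord_pos[OF t] affine_eq_vanish[of i t] that neutral_range coefA_pos_if_neutral by force
    then have "vanish i < t" using coefA_pos_if_neutral[OF that] by (simp add: zero_less_mult_iff)
    then show ?thesis using \<open>left_end < t\<close> by (simp add: u_def)
  qed
  have coord: "class_point s \<alpha> \<beta> c t i
      = (if i \<in> neutral then u (vanish i) else 1) * class_point s \<alpha> \<beta> shift_c t i"
    if "i \<in> {1..s}" for i
    using that class_point_shift_c[OF that, of t] affine_eq_vanish[of i t] coefA_pos_if_neutral[of i]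
      \<open>left_end < t\<close> by (auto simp: class_point_def u_def)
  have monomial: "reactant_monomial s \<alpha> j (class_point s \<alpha> \<beta> c t)
      = W j * reactant_monomial s \<alpha> j (class_point s \<alpha> \<beta> shift_c t)" for j
  proof -
    have "reactant_monomial s \<alpha> j (class_point s \<alpha> \<beta> c t)
        = (\<Prod>i\<in>{1..s}. (if i \<in> neutral then u (vanish i) ^ \<alpha> i j else 1)
            * class_point s \<alpha> \<beta> shift_c t i ^ \<alpha> i j)"
      unfolding reactant_monomial_def by (intro prod.cong refl) (simp add: coord power_mult_distrib)
    also have "\<dots> = W j * reactant_monomial s \<alpha> j (class_point s \<alpha> \<beta> shift_c t)"
      unfolding prod.distrib W_def reactant_monomial_def prod.If_cases[OF finite_atLeastAtMost]
      using neutral_range by (simp add: Int_absorb1)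
    finally show ?thesis .
  qed
  have "W 1 = W 2" unfolding W_def by (rule prod_neutral_degree_eq)
  moreover have "W 1 > 0" unfolding W_def by (rule prod_pos) (use u_pos in simp)
  ultimately show ?thesis
    using that[of "W 1"] unfolding reduced_rate_def monomial by (simp add: algebra_simps)
qed

lemma reactant_monomial_shift_c_factor:
  obtains Q where "isCont Q left_end" "Q left_end > 0"
    "\<And>t. reactant_monomial s \<alpha> j (class_point s \<alpha> \<beta> shift_c t) = (t - left_end) ^ class_degree \<tau> j * Q t"
proof -
  define T where "T = sp_class s \<alpha> \<beta> c \<tau>"
  define Q where "Q t = (\<Prod>i\<in>T. A i ^ \<alpha> i j) * (\<Prod>i\<in>{1..s} - T. (A i * t + coefB \<alpha> \<beta> shift_c i) ^ \<alpha> i j)"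
    for t
  have T: "T \<subseteq> {1..s}" using mem_tau_class(1) unfolding T_def by blast
  have "isCont Q left_end" unfolding Q_def by (intro continuous_intros)
  moreover have "Q left_end > 0"
  proof -
    obtain d where d: "d \<in> class_dom s \<alpha> \<beta> c" using dom_nonempty by blast
    have "0 < class_point s \<alpha> \<beta> shift_c left_end i" if "i \<in> {1..s} - T" for i
      using shifted_coord_pos[of i d left_end] that d left_end_less[OF d] unfolding T_def by simp
    then have "0 < (\<Prod>i\<in>{1..s} - T. (A i * left_end + coefB \<alpha> \<beta> shift_c i) ^ \<alpha> i j)"
      by (intro prod_pos) (simp add: class_point_def)
    moreover have "0 < (\<Prod>i\<in>T. A i ^ \<alpha> i j)"
      by (intro prod_pos) (simp add: T_def mem_tau_class(2))
    ultimately show ?thesis unfolding Q_def by simp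
  qed
  moreover have "reactant_monomial s \<alpha> j (class_point s \<alpha> \<beta> shift_c t)
      = (t - left_end) ^ class_degree \<tau> j * Q t" for t
  proof -
    have tau_coord: "class_point s \<alpha> \<beta> shift_c t i = A i * (t - left_end)" if "i \<in> T" for i
      using that mem_tau_class[of i] class_point_shift_c[of i t] affine_eq_vanish[of i t]
      unfolding T_def by simp
    have "reactant_monomial s \<alpha> j (class_point s \<alpha> \<beta> shift_c t)
        = (\<Prod>i\<in>{1..s} - T. class_point s \<alpha> \<beta> shift_c t i ^ \<alpha> i j)
          * (\<Prod>i\<in>T. class_point s \<alpha> \<beta> shift_c t i ^ \<alpha> i j)"
      unfolding reactant_monomial_def by (rule prod.subset_diff[OF T finite_atLeastAtMost])
    also have "(\<Prod>i\<in>{1..s} - T. class_point s \<alpha> \<beta> shift_c t i ^ \<alpha> i j)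
        = (\<Prod>i\<in>{1..s} - T. (A i * t + coefB \<alpha> \<beta> shift_c i) ^ \<alpha> i j)"
      by (intro prod.cong refl) (simp add: class_point_def)
    also have "(\<Prod>i\<in>T. class_point s \<alpha> \<beta> shift_c t i ^ \<alpha> i j)
        = (\<Prod>i\<in>T. A i ^ \<alpha> i j) * (t - left_end) ^ class_degree \<tau> j"
      by (simp add: tau_coord power_mult_distrib prod.distrib power_sum class_degree_def T_def)
    finally show ?thesis unfolding Q_def by (simp add: algebra_simps)
  qed
  ultimately show ?thesis using that by blast
qed

end

section \<open>Counting steady states\<close>

locale capacity_attained = leftmost_class +
  fixes \<kappa> :: "nat \<Rightarrow> real" and N :: nat
  assumes cap: "cap_pos s \<alpha> \<beta> = enat (2 * N + 1)"
    and \<kappa>_pos: "\<kappa> 1 > 0" "\<kappa> 2 > 0"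
    and finite_pss: "finite (pos_steady_states s \<alpha> \<beta> \<kappa> c)"
    and card_pss: "card (pos_steady_states s \<alpha> \<beta> \<kappa> c) = 2 * N + 1"
    and card_stable: "card {x \<in> pos_steady_states s \<alpha> \<beta> \<kappa> c. stable s \<alpha> \<beta> \<kappa> x} = N + 1"
begin

definition \<theta> :: real where
  "\<theta> = stoich \<alpha> \<beta> 1 2 / stoich \<alpha> \<beta> 1 1"

lemma stoich_cols: "\<forall>i\<in>{1..s}. stoich \<alpha> \<beta> i 2 = \<theta> * stoich \<alpha> \<beta> i 1" and \<theta>_neg: "\<theta> < 0"
proof -
  obtain x where "x \<in> pos_steady_states s \<alpha> \<beta> \<kappa> c" using card_pss by fastforce
  from pos_steady_state_stoich_proportional[OF stoich_11 one_le_s \<kappa>_pos this]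
  show "\<forall>i\<in>{1..s}. stoich \<alpha> \<beta> i 2 = \<theta> * stoich \<alpha> \<beta> i 1" "\<theta> < 0" unfolding \<theta>_def by blast+
qed

definition g :: "real \<Rightarrow> real" where
  "g t = reduced_rate s \<alpha> \<kappa> \<theta> (class_point s \<alpha> \<beta> c t)"

definition g_shift :: "real \<Rightarrow> real" where
  "g_shift t = reduced_rate s \<alpha> \<kappa> \<theta> (class_point s \<alpha> \<beta> shift_c t)"

definition zeros :: "real set" where
  "zeros = {t \<in> class_dom s \<alpha> \<beta> c. g t = 0}"

lemma pos_steady_states_eq_zeros: "pos_steady_states s \<alpha> \<beta> \<kappa> c = class_point s \<alpha> \<beta> c ` zeros"
  unfolding zeros_def g_def by (rule pos_steady_states_eq_image[OF stoich_11 one_le_s stoich_cols])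

lemma inj_on_class_point: "inj_on (class_point s \<alpha> \<beta> c') X"
  using inj_class_point[OF one_le_s] by (rule inj_on_subset) simp

lemma finite_zeros: "finite zeros" and card_zeros: "card zeros = 2 * N + 1"
  using finite_pss card_pss unfolding pos_steady_states_eq_zeros
  by (simp_all add: finite_image_iff[OF inj_on_class_point] card_image[OF inj_on_class_point])

text \<open>The shift creates no new steady states: they would exceed the capacity \<open>2N + 1\<close>, which
  is already attained.\<close>

lemma shifted_zeros_eq: "{t \<in> class_dom s \<alpha> \<beta> shift_c. g_shift t = 0} = zeros"
proof -
  define Z' where "Z' = {t \<in> class_dom s \<alpha> \<beta> shift_c. g_shift t = 0}"
  have "zeros \<subseteq> Z'"
  proof
    fix t assume "t \<in> zeros"
    then have t: "t \<in> class_dom s \<alpha> \<beta> c" "g t = 0" unfolding zeros_def by auto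
    obtain \<rho> where "\<rho> > 0" "g t = \<rho> * g_shift t"
      using reduced_rate_shift_c[OF t(1)] unfolding g_def g_shift_def by blast
    then show "t \<in> Z'" using t class_dom_subset_shift_c unfolding Z'_def by auto
  qed
  moreover have "pos_steady_states s \<alpha> \<beta> \<kappa> shift_c = class_point s \<alpha> \<beta> shift_c ` Z'"
    unfolding Z'_def g_shift_def by (rule pos_steady_states_eq_image[OF stoich_11 one_le_s stoich_cols])
  then have "finite Z'" "card Z' \<le> 2 * N + 1"
    using finite_pos_steady_states_if_cap[OF cap \<kappa>_pos, of shift_c]
    by (simp_all add: finite_image_iff[OF inj_on_class_point] card_image[OF inj_on_class_point])
  ultimately show ?thesis unfolding Z'_def[symmetric]
    using card_zeros by (metis card_seteq)
qed

lemma isCont_g: "isCont g t"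
  unfolding g_def[abs_def] using reduced_rate_class_point_has_derivative by (rule DERIV_isCont)

lemma isCont_g_shift: "isCont g_shift t"
  unfolding g_shift_def[abs_def] using reduced_rate_class_point_has_derivative by (rule DERIV_isCont)

lemma g_shift_sign_near_left_end:
  "\<forall>\<^sub>F t in at_right left_end.
     if class_degree \<tau> 1 < class_degree \<tau> 2 then g_shift t > 0 else g_shift t < 0"
proof -
  obtain Q1 where Q1: "isCont Q1 left_end" "Q1 left_end > 0"
    "\<And>t. reactant_monomial s \<alpha> 1 (class_point s \<alpha> \<beta> shift_c t) = (t - left_end) ^ class_degree \<tau> 1 * Q1 t"
    by (rule reactant_monomial_shift_c_factor[where j = 1]) (rule that)
  obtain Q2 where Q2: "isCont Q2 left_end" "Q2 left_end > 0"
    "\<And>t. reactant_monomial s \<alpha> 2 (class_point s \<alpha> \<beta> shift_c t) = (t - left_end) ^ class_degree \<tau> 2 * Q2 t"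
    by (rule reactant_monomial_shift_c_factor[where j = 2]) (rule that)
  define P1 where "P1 t = \<kappa> 1 * Q1 t" for t
  define P2 where "P2 t = - (\<theta> * \<kappa> 2 * Q2 t)" for t
  have "isCont P1 left_end" "isCont P2 left_end"
    unfolding P1_def P2_def using Q1 Q2 by (auto intro: continuous_intros)
  have "P1 left_end > 0" "P2 left_end > 0"
    using \<kappa>_pos Q1(2) Q2(2) \<theta>_neg by (simp_all add: P1_def P2_def mult_neg_pos)
  have g_shift_eq: "g_shift t
      = (t - left_end) ^ class_degree \<tau> 1 * P1 t - (t - left_end) ^ class_degree \<tau> 2 * P2 t" for t
    unfolding g_shift_def reduced_rate_def Q1(3) Q2(3) P1_def P2_def by (simp add: algebra_simps)
  show ?thesis
  proof (cases "class_degree \<tau> 1 < class_degree \<tau> 2")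
    case True
    have "\<forall>\<^sub>F t in at_right left_end. (t - left_end) ^ class_degree \<tau> 1 * P1 t
        + (t - left_end) ^ class_degree \<tau> 2 * (- P2 t) > 0"
      using \<open>isCont P1 left_end\<close> \<open>isCont P2 left_end\<close> \<open>P1 left_end > 0\<close>
      by (intro eventually_pos_at_right_power_sum[OF True]) (auto intro: continuous_intros)
    then show ?thesis using True by (simp add: g_shift_eq)
  next
    case False
    then have less: "class_degree \<tau> 2 < class_degree \<tau> 1"
      using tau_in_H unfolding Hset_iff by simp
    have "\<forall>\<^sub>F t in at_right left_end. (t - left_end) ^ class_degree \<tau> 2 * P2 t
        + (t - left_end) ^ class_degree \<tau> 1 * (- P1 t) > 0"
      using \<open>isCont P1 left_end\<close> \<open>isCont P2 left_end\<close> \<open>P2 left_end > 0\<close>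
      by (intro eventually_pos_at_right_power_sum[OF less]) (auto intro: continuous_intros)
    then show ?thesis using False by (simp add: g_shift_eq)
  qed
qed

text \<open>Left of all steady states, \<open>g\<close> has the sign that \<open>g_shift\<close> has just right of \<open>left_end\<close>:
  \<open>g_shift\<close> has no zero in between, and it is a positive multiple of \<open>g\<close> on the class domain.\<close>

lemma g_sign_before_zeros:
  assumes p: "p \<in> class_dom s \<alpha> \<beta> c" and before: "\<And>z. z \<in> zeros \<Longrightarrow> p < z"
  shows "if class_degree \<tau> 1 < class_degree \<tau> 2 then g p > 0 else g p < 0"
proof -
  let ?sign = "\<lambda>x. if class_degree \<tau> 1 < class_degree \<tau> 2 then x > 0 else x < (0::real)"
  obtain b where "b > left_end" and b: "\<And>y. left_end < y \<Longrightarrow> y < b \<Longrightarrow> ?sign (g_shift y)"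
    using g_shift_sign_near_left_end unfolding eventually_at_right_field by blast
  define t1 where "t1 = min p ((left_end + b) / 2)"
  have "left_end < t1" "t1 < b" "t1 \<le> p"
    using left_end_less[OF p] \<open>b > left_end\<close> by (auto simp: t1_def min_def)
  then have "?sign (g_shift t1)" using b by blast
  have nz: "g_shift x \<noteq> 0" if "t1 \<le> x" "x \<le> p" for x
  proof
    assume "g_shift x = 0"
    moreover have "x \<in> class_dom s \<alpha> \<beta> shift_c"
      using class_dom_shift_c[OF p] \<open>left_end < t1\<close> that by simp
    ultimately have "x \<in> zeros" using shifted_zeros_eq by blast
    then show False using before that by force
  qed
  have "g_shift p > 0 \<longleftrightarrow> g_shift t1 > 0"
    by (rule continuous_nonzero_sign_eq[symmetric, OF _ \<open>t1 \<le> p\<close> nz])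
      (simp add: continuous_at_imp_continuous_on isCont_g_shift)
  then have "?sign (g_shift p)"
    using \<open>?sign (g_shift t1)\<close> nz[OF \<open>t1 \<le> p\<close> order_refl] nz[OF order_refl \<open>t1 \<le> p\<close>]
    by (auto split: if_splits)
  moreover obtain \<rho> where "\<rho> > 0" "g p = \<rho> * g_shift p"
    using reduced_rate_shift_c[OF p] unfolding g_def g_shift_def by blast
  ultimately show ?thesis by (auto simp: zero_less_mult_iff mult_less_0_iff split: if_splits)
qed

definition scaled_g :: "real \<Rightarrow> real" where
  "scaled_g t = stoich \<alpha> \<beta> 1 1 * g t"

lemma scaled_g_zeros: "{z \<in> class_dom s \<alpha> \<beta> c. scaled_g z = 0} = zeros"
  using stoich_11 unfolding zeros_def scaled_g_def by auto

lemma card_stable_zeros: "card {t \<in> zeros. stable s \<alpha> \<beta> \<kappa> (class_point s \<alpha> \<beta> c t)} = N + 1"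
proof -
  have "{x \<in> pos_steady_states s \<alpha> \<beta> \<kappa> c. stable s \<alpha> \<beta> \<kappa> x}
      = class_point s \<alpha> \<beta> c ` {t \<in> zeros. stable s \<alpha> \<beta> \<kappa> (class_point s \<alpha> \<beta> c t)}"
    unfolding pos_steady_states_eq_zeros by auto
  then show ?thesis using card_stable card_image[OF inj_on_class_point] by simp
qed

lemma stable_zero_down_crossing:
  assumes "t \<in> zeros" "stable s \<alpha> \<beta> \<kappa> (class_point s \<alpha> \<beta> c t)"
  shows "down_crossing scaled_g t"
proof -
  obtain D where D: "((\<lambda>t. reduced_rate s \<alpha> \<kappa> \<theta> (class_point s \<alpha> \<beta> c t)) has_real_derivative D) (at t)"
    using reduced_rate_class_point_has_derivative by blast
  have "stoich \<alpha> \<beta> 1 1 * D < 0"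
    by (rule stable_imp_reduced_rate_deriv_sign[OF stoich_11 one_le_s stoich_cols D assms(2)])
  moreover have "(scaled_g has_real_derivative stoich \<alpha> \<beta> 1 1 * D) (at t)"
    unfolding scaled_g_def[abs_def] g_def using D by (rule DERIV_cmult)
  moreover have "scaled_g t = 0" using assms(1) unfolding zeros_def scaled_g_def by simp
  ultimately show ?thesis by (intro down_crossing_if_deriv_neg)
qed

lemma card_up_crossings_less_down:
  "card {z \<in> class_dom s \<alpha> \<beta> c. scaled_g z = 0 \<and> up_crossing scaled_g z}
     < card {z \<in> class_dom s \<alpha> \<beta> c. scaled_g z = 0 \<and> down_crossing scaled_g z}"
    (is "card ?Up < card ?Dn")
proof -
  have "finite ?Dn" "finite ?Up" and sub: "?Dn \<union> ?Up \<subseteq> zeros" and "?Dn \<inter> ?Up = {}"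
    using finite_zeros not_down_and_up_crossing scaled_g_zeros by (auto intro: finite_subset)
  then have "card ?Dn + card ?Up = card (?Dn \<union> ?Up)" by (simp add: card_Un_disjoint)
  also have "\<dots> \<le> 2 * N + 1" using card_mono[OF finite_zeros sub] card_zeros by simp
  finally have "card ?Dn + card ?Up \<le> 2 * N + 1" .
  moreover have "{t \<in> zeros. stable s \<alpha> \<beta> \<kappa> (class_point s \<alpha> \<beta> c t)} \<subseteq> ?Dn"
    using stable_zero_down_crossing scaled_g_zeros by blast
  then have "N + 1 \<le> card ?Dn"
    using card_mono[OF \<open>finite ?Dn\<close>] unfolding card_stable_zeros[symmetric] by blast
  ultimately show ?thesis by linarith
qed

text \<open>Otherwise \<open>scaled_g\<close> would be negative left of all zeros, so it would have at least as
  many up as down crossings.\<close>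

lemma stoich_11_pos_iff: "stoich \<alpha> \<beta> 1 1 > 0 \<longleftrightarrow> class_degree \<tau> 1 < class_degree \<tau> 2"
proof (rule ccontr)
  assume wrong_sign: "\<not> (stoich \<alpha> \<beta> 1 1 > 0 \<longleftrightarrow> class_degree \<tau> 1 < class_degree \<tau> 2)"
  define U where "U = class_dom s \<alpha> \<beta> c"
  have "- scaled_g p > 0" if p: "p \<in> U" and before: "\<And>z. z \<in> U \<Longrightarrow> - scaled_g z = 0 \<Longrightarrow> p < z" for p
  proof -
    have "p < z" if "z \<in> zeros" for z
      using before[of z] that scaled_g_zeros unfolding U_def by auto
    then have "if class_degree \<tau> 1 < class_degree \<tau> 2 then g p > 0 else g p < 0"
      using g_sign_before_zeros p unfolding U_def by blast
    then show ?thesis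
      using wrong_sign stoich_11 unfolding scaled_g_def by (auto simp: mult_less_0_iff split: if_splits)
  qed
  then have "card {z \<in> U. - scaled_g z = 0 \<and> up_crossing (\<lambda>t. - scaled_g t) z}
      \<le> card {z \<in> U. - scaled_g z = 0 \<and> down_crossing (\<lambda>t. - scaled_g t) z}"
    using finite_zeros scaled_g_zeros
    by (intro card_up_crossings_le_down_crossings)
      (auto simp: U_def scaled_g_def isCont_g open_class_dom is_interval_class_dom
        intro!: continuous_at_imp_continuous_on continuous_intros)
  then show False
    using card_up_crossings_less_down
    unfolding U_def up_crossing_uminus down_crossing_uminus neg_equal_0_iff_equal by simp
qed

lemma tau_sign_condition:
  "(gam s \<alpha> \<beta> c \<tau> 1 - gam s \<alpha> \<beta> c \<tau> 2) * (int (\<beta> \<tau> 1) - int (\<alpha> \<tau> 1)) < 0"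
proof -
  define d where "d = int (\<beta> \<tau> 1) - int (\<alpha> \<tau> 1)"
  have d_eq: "real_of_int d = stoich \<alpha> \<beta> 1 1 * A \<tau>"
    using stoich_eq_coefA[OF stoich_11, of \<tau>] unfolding d_def stoich_def by simp
  have "d > 0 \<longleftrightarrow> real_of_int d > 0" by simp
  also have "\<dots> \<longleftrightarrow> stoich \<alpha> \<beta> 1 1 > 0" unfolding d_eq using coefA_tau_pos by (simp add: zero_less_mult_iff)
  finally have "d > 0 \<longleftrightarrow> stoich \<alpha> \<beta> 1 1 > 0" .
  moreover have "d \<noteq> 0" using d_eq stoich_11 coefA_tau_pos by (metis less_irrefl mult_eq_0_iff of_int_0)
  moreover have "gam s \<alpha> \<beta> c \<tau> 1 - gam s \<alpha> \<beta> c \<tau> 2 = int (class_degree \<tau> 1) - int (class_degree \<tau> 2)"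
    unfolding class_degree_def by (rule gam_diff_eq)
  moreover have "class_degree \<tau> 1 \<noteq> class_degree \<tau> 2" using tau_in_H unfolding Hset_iff by simp
  ultimately show ?thesis using stoich_11_pos_iff unfolding d_def by (auto simp: mult_less_0_iff)
qed

end

theorem lemma7p8:
  fixes s r N :: nat and \<alpha> \<beta> :: "nat \<Rightarrow> nat \<Rightarrow> nat" and \<kappa>s cs :: "nat \<Rightarrow> real"
  assumes G: "two_reaction_network s \<alpha> \<beta>"
    and lab1: "\<beta> 1 1 \<noteq> \<alpha> 1 1"
    and cap: "cap_pos s \<alpha> \<beta> = enat (2 * N + 1)"
    and kpos: "\<kappa>s 1 > 0" "\<kappa>s 2 > 0"
    and nss: "finite (pos_steady_states s \<alpha> \<beta> \<kappa>s cs)"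
             "card (pos_steady_states s \<alpha> \<beta> \<kappa>s cs) = 2 * N + 1"
    and nstab: "card {x \<in> pos_steady_states s \<alpha> \<beta> \<kappa>s cs. stable s \<alpha> \<beta> \<kappa>s x} = N + 1"
    and reps: "class_reps s \<alpha> \<beta> cs r"
    and lab2: "1 \<in> Hset s \<alpha> \<beta> cs r"
  shows "\<forall>\<tau>. is_tau s \<alpha> \<beta> cs r \<tau> \<longrightarrow>
           (gam s \<alpha> \<beta> cs \<tau> 1 - gam s \<alpha> \<beta> cs \<tau> 2) * (int (\<beta> \<tau> 1) - int (\<alpha> \<tau> 1)) < 0
         \<and> (sp_class s \<alpha> \<beta> cs \<tau> = {\<tau>} \<longrightarrow>
              (int (\<alpha> \<tau> 1) - int (\<alpha> \<tau> 2)) * (int (\<beta> \<tau> 1) - int (\<alpha> \<tau> 1)) < 0)"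
proof (intro allI impI conjI)
  fix \<tau> assume tau: "is_tau s \<alpha> \<beta> cs r \<tau>"
  have "1 \<le> s" using G unfolding two_reaction_network_def by simp
  have "stoich \<alpha> \<beta> 1 1 \<noteq> 0" using lab1 unfolding stoich_def by simp
  obtain x where "x \<in> pos_steady_states s \<alpha> \<beta> \<kappa>s cs" using nss(2) by fastforce
  then have "class_dom s \<alpha> \<beta> cs \<noteq> {}"
    using pos_steady_state_in_class_dom[OF \<open>stoich \<alpha> \<beta> 1 1 \<noteq> 0\<close>] by blast
  then interpret capacity_attained s r \<alpha> \<beta> cs \<tau> \<kappa>s N
    using \<open>1 \<le> s\<close> \<open>stoich \<alpha> \<beta> 1 1 \<noteq> 0\<close> reps lab2 tau cap kpos nss nstab by unfold_locales
  show sign: "(gam s \<alpha> \<beta> cs \<tau> 1 - gam s \<alpha> \<beta> cs \<tau> 2) * (int (\<beta> \<tau> 1) - int (\<alpha> \<tau> 1)) < 0"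
    by (rule tau_sign_condition)
  assume "sp_class s \<alpha> \<beta> cs \<tau> = {\<tau>}"
  then have "gam s \<alpha> \<beta> cs \<tau> 1 - gam s \<alpha> \<beta> cs \<tau> 2 = int (\<alpha> \<tau> 1) - int (\<alpha> \<tau> 2)"
    unfolding gam_diff_eq by simp
  then show "(int (\<alpha> \<tau> 1) - int (\<alpha> \<tau> 2)) * (int (\<beta> \<tau> 1) - int (\<alpha> \<tau> 1)) < 0"
    using sign by simp
qed

end
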